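(* Let $V=\mathbb C^n$ with $n$ even and $n\ge8$. The rational map $\phi:\mathbb P(\Lambda^2V)\times\mathbb P(\Lambda^2V)\dashrightarrow\mathbb P(S^2V)$, $([A],[B])\mapsto[AJB-BJA]$, has differential of maximal rank at a general point (equivalently, the bilinear map $(A,B)\mapsto AJB-BJA$, $\Lambda^2V\times\Lambda^2V\to S^2V$, has surjective differential at a general point). In particular $\phi$ is dominant.
   Context: $\Lambda^2V$ and $S^2V$ denote skew-symmetric and symmetric $n\times n$ complex matrices, $n=2p$, and $J=\begin{bmatrix}0&I_p\\-I_p&0\end{bmatrix}$. *)

theory Defs
  imports "Jordan_Normal_Form.Matrix"
begin

definition skew_mats :: "nat \<Rightarrow> complex mat set" where
  "skew_mats n = {A. A \<in> carrier_mat n n \<and> transpose_mat A = - A}"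

definition sym_mats :: "nat \<Rightarrow> complex mat set" where
  "sym_mats n = {S. S \<in> carrier_mat n n \<and> transpose_mat S = S}"

definition Jmat :: "nat \<Rightarrow> complex mat" where
  "Jmat p = four_block_mat (0\<^sub>m p p) (1\<^sub>m p) (- 1\<^sub>m p) (0\<^sub>m p p)"

definition beta :: "nat \<Rightarrow> complex mat \<Rightarrow> complex mat \<Rightarrow> complex mat" where
  "beta p A B = A * Jmat p * B - B * Jmat p * A"

definition dbeta :: "nat \<Rightarrow> complex mat \<Rightarrow> complex mat \<Rightarrow> complex mat \<Rightarrow> complex mat \<Rightarrow> complex mat" where
  "dbeta p A B X Y = beta p X B + beta p A Y"

definition dbeta_surjective :: "nat \<Rightarrow> complex mat \<Rightarrow> complex mat \<Rightarrow> bool" where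
  "dbeta_surjective p A B \<longleftrightarrow>
     (\<forall>S \<in> sym_mats (2*p). \<exists>X \<in> skew_mats (2*p). \<exists>Y \<in> skew_mats (2*p). dbeta p A B X Y = S)"

inductive poly_fun2 :: "nat \<Rightarrow> (complex mat \<times> complex mat \<Rightarrow> complex) \<Rightarrow> bool" for n where
  const2: "poly_fun2 n (\<lambda>_. c)"
| fst2: "i < n \<Longrightarrow> j < n \<Longrightarrow> poly_fun2 n (\<lambda>(A,B). A $$ (i,j))"
| snd2: "i < n \<Longrightarrow> j < n \<Longrightarrow> poly_fun2 n (\<lambda>(A,B). B $$ (i,j))"
| add2: "poly_fun2 n f \<Longrightarrow> poly_fun2 n g \<Longrightarrow> poly_fun2 n (\<lambda>x. f x + g x)"
| mult2: "poly_fun2 n f \<Longrightarrow> poly_fun2 n g \<Longrightarrow> poly_fun2 n (\<lambda>x. f x * g x)"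

inductive poly_fun1 :: "nat \<Rightarrow> (complex mat \<Rightarrow> complex) \<Rightarrow> bool" for n where
  const1: "poly_fun1 n (\<lambda>_. c)"
| entry1: "i < n \<Longrightarrow> j < n \<Longrightarrow> poly_fun1 n (\<lambda>S. S $$ (i,j))"
| add1: "poly_fun1 n f \<Longrightarrow> poly_fun1 n g \<Longrightarrow> poly_fun1 n (\<lambda>x. f x + g x)"
| mult1: "poly_fun1 n f \<Longrightarrow> poly_fun1 n g \<Longrightarrow> poly_fun1 n (\<lambda>x. f x * g x)"

text \<open>A property holds at a general point of Lambda^2 V x Lambda^2 V: it holds on a
  nonempty Zariski-open subset, i.e. on the (nonempty) non-vanishing locus of some polynomial.\<close>
definition holds_generally2 :: "nat \<Rightarrow> (complex mat \<Rightarrow> complex mat \<Rightarrow> bool) \<Rightarrow> bool" where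
  "holds_generally2 n P \<longleftrightarrow>
     (\<exists>f. poly_fun2 n f \<and>
          (\<exists>A \<in> skew_mats n. \<exists>B \<in> skew_mats n. f (A, B) \<noteq> 0) \<and>
          (\<forall>A \<in> skew_mats n. \<forall>B \<in> skew_mats n. f (A, B) \<noteq> 0 \<longrightarrow> P A B))"

text \<open>Dominance of beta onto S^2 V: its image is Zariski dense in S^2 V.\<close>
definition beta_dominant :: "nat \<Rightarrow> bool" where
  "beta_dominant p \<longleftrightarrow>
     (\<forall>g. poly_fun1 (2*p) g \<longrightarrow>
          (\<forall>A \<in> skew_mats (2*p). \<forall>B \<in> skew_mats (2*p). g (beta p A B) = 0) \<longrightarrow>
          (\<forall>S \<in> sym_mats (2*p). g S = 0))"

end

theory Submission
  imports Defs "Jordan_Normal_Form.Determinant"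
begin

text \<open>
  At the special point \<open>(A, B) = (special_A p, special_B p)\<close> one has \<open>J B = M\<close>, \<open>B J = M\<^sup>T\<close>
  for an explicit matrix \<open>M\<close>, and \<open>A J = J A = D\<close> is diagonal with weights \<open>1..p, 1..p\<close>. Hence
  \<open>d\<beta>(X, Y) = X M - M\<^sup>T X + [D, Y]\<close>: the commutator reaches every entry whose two weights
  differ, and an explicit skew \<open>X\<close> matches the entries \<open>(i,i)\<close>, \<open>(i+p,i+p)\<close> and \<open>(i,i+p)\<close>.

  Surjectivity of \<open>d\<beta>\<close> at \<open>(A, B)\<close> is certified by the invertibility of a Gram matrix built
  from the Jacobian of \<open>d\<beta>\<close> in a fixed spanning family of \<open>\<Lambda>\<^sup>2V \<times> \<Lambda>\<^sup>2V\<close>; its determinant is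
  a polynomial in the entries of \<open>(A, B)\<close>, nonzero at the special point because the Jacobian is
  real there. This gives surjectivity at a general point.

  For dominance, let \<open>g\<close> have degree at most \<open>d\<close> and vanish on the image of \<open>\<beta>\<close>, and let \<open>S\<close>
  be symmetric. Wherever \<open>S = d\<beta>(X, Y)\<close>, \<open>S\<close> is the velocity of the curve
  \<open>\<beta>(A + tX, B + tY)\<close> in the image, so the derivative of \<open>g\<close> in direction \<open>S\<close>, a polynomial of
  degree below \<open>d\<close>, vanishes at \<open>\<beta>(A, B)\<close>. By density it vanishes on the whole image, by
  induction on all symmetric matrices, so \<open>g\<close> is constant on the line through \<open>0\<close> and \<open>S\<close> and
  \<open>g S = g 0 = g (\<beta>(0, 0)) = 0\<close>.
\<close>

lemma index_mult_mat_sum: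
  assumes "A \<in> carrier_mat n m" "B \<in> carrier_mat m k" "i < n" "j < k"
  shows "(A * B) $$ (i,j) = (\<Sum>l<m. A $$ (i,l) * B $$ (l,j))"
  using assms by (simp add: scalar_prod_def lessThan_atLeast0)

lemma index_mult_mat_vec_sum:
  assumes "A \<in> carrier_mat n n" "v \<in> carrier_vec n" "r < n"
  shows "(A *\<^sub>v v) $ r = (\<Sum>k<n. A $$ (r,k) * v $ k)"
  using assms by (simp add: scalar_prod_def lessThan_atLeast0 mult.commute)

lemma sum_lessThan_add:
  fixes p q :: nat shows "(\<Sum>k<p+q. g k) = (\<Sum>k<p. g k) + (\<Sum>k<q. g (k+p))"
  by (induction q) (simp_all add: ac_simps)

lemma sum_lessThan_double:
  fixes p :: nat shows "(\<Sum>k<2*p. g k) = (\<Sum>k<p. g k) + (\<Sum>k<p. g (k+p))"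
  using sum_lessThan_add[of g p p] by (simp add: mult_2)

lemma skew_matsD: "X \<in> skew_mats n \<Longrightarrow> X \<in> carrier_mat n n \<and> transpose_mat X = - X"
  by (simp add: skew_mats_def)

lemma skew_mats_entry:
  assumes "X \<in> skew_mats n" "i < n" "j < n"
  shows "X $$ (j,i) = - X $$ (i,j)"
proof -
  have "X \<in> carrier_mat n n" "transpose_mat X = - X" using assms(1) by (auto simp: skew_mats_def)
  then show ?thesis using assms(2,3) by (metis carrier_matD index_transpose_mat(1) index_uminus_mat(1))
qed

lemma sym_mats_entry:
  assumes "S \<in> sym_mats n" "i < n" "j < n"
  shows "S $$ (j,i) = S $$ (i,j)"
proof -
  have "S \<in> carrier_mat n n" "transpose_mat S = S" using assms(1) by (auto simp: sym_mats_def)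
  then show ?thesis using assms(2,3) by (metis carrier_matD index_transpose_mat(1))
qed

lemma zero_skew_mats: "0\<^sub>m n n \<in> skew_mats n"
  unfolding skew_mats_def by (auto intro!: eq_matI)

lemma skew_mats_add_smult:
  assumes "A \<in> skew_mats n" "X \<in> skew_mats n"
  shows "A + t \<cdot>\<^sub>m X \<in> skew_mats n"
proof -
  have c: "A \<in> carrier_mat n n" "X \<in> carrier_mat n n" using assms skew_matsD by blast+
  have "transpose_mat (A + t \<cdot>\<^sub>m X) = - (A + t \<cdot>\<^sub>m X)"
  proof (rule eq_matI)
    fix i j assume "i < dim_row (- (A + t \<cdot>\<^sub>m X))" "j < dim_col (- (A + t \<cdot>\<^sub>m X))"
    then have ij: "i < n" "j < n" using c by auto
    then show "transpose_mat (A + t \<cdot>\<^sub>m X) $$ (i, j) = (- (A + t \<cdot>\<^sub>m X)) $$ (i, j)"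
      using c skew_mats_entry[OF assms(1) ij(2,1)] skew_mats_entry[OF assms(2) ij(2,1)] by simp
  qed (use c in auto)
  with c show ?thesis by (simp add: skew_mats_def)
qed

lemma sym_mats_smult:
  assumes "S \<in> sym_mats n"
  shows "t \<cdot>\<^sub>m S \<in> sym_mats n"
proof -
  have c: "S \<in> carrier_mat n n" using assms by (simp add: sym_mats_def)
  have "transpose_mat (t \<cdot>\<^sub>m S) = t \<cdot>\<^sub>m S"
  proof (rule eq_matI)
    fix i j assume "i < dim_row (t \<cdot>\<^sub>m S)" "j < dim_col (t \<cdot>\<^sub>m S)"
    then have ij: "i < n" "j < n" using c by auto
    then show "transpose_mat (t \<cdot>\<^sub>m S) $$ (i, j) = (t \<cdot>\<^sub>m S) $$ (i, j)"
      using c sym_mats_entry[OF assms ij(2,1)] by simp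
  qed (use c in auto)
  with c show ?thesis by (simp add: sym_mats_def)
qed

lemma Jmat_carrier[simp]: "Jmat p \<in> carrier_mat (2*p) (2*p)"
  unfolding Jmat_def by (auto intro!: four_block_carrier_mat)

lemma Jmat_dim[simp]: "dim_row (Jmat p) = 2*p" "dim_col (Jmat p) = 2*p"
  by (simp_all add: Jmat_def)

lemma index_Jmat:
  assumes "i < 2*p" "j < 2*p"
  shows "Jmat p $$ (i,j) = (if i < p then (if j = i+p then 1 else 0) else (if i = j+p then -1 else 0))"
  using assms unfolding Jmat_def by (auto simp: index_mat_four_block)

lemma index_Jmat_mult:
  assumes "U \<in> carrier_mat (2*p) (2*p)" "i < 2*p" "j < 2*p"
  shows "(Jmat p * U) $$ (i,j) = (if i < p then U $$ (i+p,j) else - U $$ (i-p,j))"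
proof -
  have "(Jmat p * U) $$ (i,j) = (\<Sum>k<2*p. Jmat p $$ (i,k) * U $$ (k,j))"
    using assms by (simp only: index_mult_mat_sum[OF Jmat_carrier assms(1)])
  also have "\<dots> = (\<Sum>k<2*p. if i < p then (if k = i+p then U $$ (k,j) else 0)
                             else (if k = i - p then - U $$ (k,j) else 0))"
    using assms by (intro sum.cong) (auto simp: index_Jmat)
  also have "\<dots> = (if i < p then U $$ (i+p,j) else - U $$ (i-p,j))"
    using assms by (auto simp: sum.delta')
  finally show ?thesis .
qed

lemma index_mult_Jmat:
  assumes "U \<in> carrier_mat (2*p) (2*p)" "i < 2*p" "j < 2*p"
  shows "(U * Jmat p) $$ (i,j) = (if j < p then - U $$ (i,j+p) else U $$ (i,j-p))"
proof -
  have "(U * Jmat p) $$ (i,j) = (\<Sum>k<2*p. U $$ (i,k) * Jmat p $$ (k,j))"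
    using assms by (simp only: index_mult_mat_sum[OF assms(1) Jmat_carrier])
  also have "\<dots> = (\<Sum>k<2*p. if j < p then (if k = j+p then - U $$ (i,k) else 0)
                             else (if k = j - p then U $$ (i,k) else 0))"
    using assms by (intro sum.cong) (auto simp: index_Jmat)
  also have "\<dots> = (if j < p then - U $$ (i,j+p) else U $$ (i,j-p))"
    using assms by (auto simp: sum.delta')
  finally show ?thesis .
qed

lemma transpose_Jmat: "transpose_mat (Jmat p) = - Jmat p"
  by (rule eq_matI) (auto simp: index_Jmat)

lemma beta_carrier:
  "X \<in> carrier_mat (2*p) (2*p) \<Longrightarrow> B \<in> carrier_mat (2*p) (2*p) \<Longrightarrow> beta p X B \<in> carrier_mat (2*p) (2*p)"
  unfolding beta_def by (auto intro!: minus_carrier_mat mult_carrier_mat[of _ _ "2*p"])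

lemma dbeta_carrier:
  assumes "A \<in> carrier_mat (2*p) (2*p)" "B \<in> carrier_mat (2*p) (2*p)"
    "X \<in> carrier_mat (2*p) (2*p)" "Y \<in> carrier_mat (2*p) (2*p)"
  shows "dbeta p A B X Y \<in> carrier_mat (2*p) (2*p)"
  unfolding dbeta_def using assms by (intro add_carrier_mat beta_carrier)

lemma transpose_mult_Jmat_skew:
  assumes "X \<in> skew_mats (2*p)" "B \<in> skew_mats (2*p)"
  shows "transpose_mat (X * Jmat p * B) = - (B * Jmat p * X)"
proof -
  have X: "X \<in> carrier_mat (2*p) (2*p)" "transpose_mat X = - X"
    and B: "B \<in> carrier_mat (2*p) (2*p)" "transpose_mat B = - B"
    using assms by (auto simp: skew_mats_def)
  have "transpose_mat (X * Jmat p * B) = transpose_mat B * transpose_mat (X * Jmat p)"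
    using X B by (simp add: transpose_mult[of _ "2*p" "2*p"])
  also have "transpose_mat (X * Jmat p) = - Jmat p * - X"
    unfolding transpose_mult[OF X(1) Jmat_carrier] transpose_Jmat X(2) ..
  also have "- Jmat p * - X = Jmat p * X"
    using X by simp
  also have "transpose_mat B * (Jmat p * X) = - (B * (Jmat p * X))"
    using X B by simp
  also have "B * (Jmat p * X) = B * Jmat p * X"
    using X B by (simp add: assoc_mult_mat[of B "2*p" "2*p" _ "2*p" X "2*p"])
  finally show ?thesis .
qed

lemma transpose_beta:
  assumes "X \<in> skew_mats (2*p)" "B \<in> skew_mats (2*p)"
  shows "transpose_mat (beta p X B) = beta p X B"
proof -
  have c: "X * Jmat p * B \<in> carrier_mat (2*p) (2*p)" "B * Jmat p * X \<in> carrier_mat (2*p) (2*p)"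
    using assms by (auto simp: skew_mats_def)
  have "transpose_mat (beta p X B) = - (B * Jmat p * X) - - (X * Jmat p * B)"
    unfolding beta_def transpose_minus[OF c]
      transpose_mult_Jmat_skew[OF assms] transpose_mult_Jmat_skew[OF assms(2,1)] ..
  also have "\<dots> = X * Jmat p * B - B * Jmat p * X"
    using c assms by (auto intro!: eq_matI simp: skew_mats_def)
  finally show ?thesis unfolding beta_def .
qed

lemma beta_entry_sym:
  assumes "X \<in> skew_mats (2*p)" "B \<in> skew_mats (2*p)" "i < 2*p" "j < 2*p"
  shows "beta p X B $$ (j,i) = beta p X B $$ (i,j)"
proof -
  have "beta p X B \<in> carrier_mat (2*p) (2*p)" using assms beta_carrier skew_matsD by blast
  then show ?thesis using assms(3,4) transpose_beta[OF assms(1,2)]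
    by (metis carrier_matD index_transpose_mat(1))
qed

lemma dbeta_entry_sym:
  assumes "A \<in> skew_mats (2*p)" "B \<in> skew_mats (2*p)" "X \<in> skew_mats (2*p)" "Y \<in> skew_mats (2*p)"
    "i < 2*p" "j < 2*p"
  shows "dbeta p A B X Y $$ (j,i) = dbeta p A B X Y $$ (i,j)"
proof -
  have "beta p X B \<in> carrier_mat (2*p) (2*p)" "beta p A Y \<in> carrier_mat (2*p) (2*p)"
    using assms beta_carrier skew_matsD by blast+
  then show ?thesis
    unfolding dbeta_def using assms beta_entry_sym[OF assms(3,2)] beta_entry_sym[OF assms(1,4)] by simp
qed

section \<open>Surjectivity of the differential at a special point\<close>

definition cyc_succ :: "nat \<Rightarrow> nat \<Rightarrow> nat" where
  "cyc_succ p i = (if Suc i < p then Suc i else 0)"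

definition cyc_pred :: "nat \<Rightarrow> nat \<Rightarrow> nat" where
  "cyc_pred p i = (if i = 0 then p - 1 else i - 1)"

text \<open>The matrix \<open>shift_mat p = [[P, 0], [E\<^sub>0\<^sub>2 - E\<^sub>2\<^sub>0, P\<^sup>T]]\<close>, where \<open>P\<close> is the
  cyclic shift \<open>e\<^sub>j \<mapsto> e\<^sub>j\<^sub>+\<^sub>1\<close> of \<open>\<complex>\<^sup>p\<close>.\<close>

definition shift_fun :: "nat \<Rightarrow> nat \<Rightarrow> nat \<Rightarrow> complex" where
  "shift_fun p k j =
     (if k < p then (if j < p \<and> k = cyc_succ p j then 1 else 0)
      else if j < p then (if k - p = 0 \<and> j = 2 then 1 else if k - p = 2 \<and> j = 0 then -1 else 0)
      else if j - p = cyc_succ p (k - p) then 1 else 0)"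

definition shift_mat :: "nat \<Rightarrow> complex mat" where
  "shift_mat p = mat (2*p) (2*p) (\<lambda>(k,j). shift_fun p k j)"

definition special_B :: "nat \<Rightarrow> complex mat" where
  "special_B p = - (Jmat p * shift_mat p)"

definition weight :: "nat \<Rightarrow> nat \<Rightarrow> complex" where
  "weight p i = of_nat (if i < p then i else i - p) + 1"

definition weight_mat :: "nat \<Rightarrow> complex mat" where
  "weight_mat p = mat (2*p) (2*p) (\<lambda>(i,j). if i = j then weight p i else 0)"

definition special_A :: "nat \<Rightarrow> complex mat" where
  "special_A p = mat (2*p) (2*p) (\<lambda>(i,j).
     if i < p \<and> j = i + p then - weight p i else if p \<le> i \<and> i = j + p then weight p j else 0)"

lemma shift_mat_carrier[simp]: "shift_mat p \<in> carrier_mat (2*p) (2*p)"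
  by (simp add: shift_mat_def)

lemma special_B_carrier[simp]: "special_B p \<in> carrier_mat (2*p) (2*p)"
  unfolding special_B_def by (intro uminus_carrier_mat mult_carrier_mat[OF Jmat_carrier shift_mat_carrier])

lemma special_A_carrier[simp]: "special_A p \<in> carrier_mat (2*p) (2*p)"
  by (simp add: special_A_def)

lemma weight_mat_carrier[simp]: "weight_mat p \<in> carrier_mat (2*p) (2*p)"
  by (simp add: weight_mat_def)

lemma special_dims[simp]:
  "dim_row (shift_mat p) = 2*p" "dim_col (shift_mat p) = 2*p"
  "dim_row (special_B p) = 2*p" "dim_col (special_B p) = 2*p"
  "dim_row (special_A p) = 2*p" "dim_col (special_A p) = 2*p"
  "dim_row (weight_mat p) = 2*p" "dim_col (weight_mat p) = 2*p"
  by (simp_all add: shift_mat_def special_B_def special_A_def weight_mat_def)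

lemma index_shift_mat: "i < 2*p \<Longrightarrow> j < 2*p \<Longrightarrow> shift_mat p $$ (i,j) = shift_fun p i j"
  by (simp add: shift_mat_def)

lemma index_weight_mat: "i < 2*p \<Longrightarrow> j < 2*p \<Longrightarrow> weight_mat p $$ (i,j) = (if i = j then weight p i else 0)"
  by (simp add: weight_mat_def)

lemma index_special_A:
  "i < 2*p \<Longrightarrow> j < 2*p \<Longrightarrow> special_A p $$ (i,j) =
     (if i < p \<and> j = i + p then - weight p i else if p \<le> i \<and> i = j + p then weight p j else 0)"
  by (simp add: special_A_def)

lemma index_special_B:
  assumes "i < 2*p" "j < 2*p"
  shows "special_B p $$ (i,j) = (if i < p then - shift_fun p (i+p) j else shift_fun p (i-p) j)"
proof -
  have "special_B p $$ (i,j) = - ((Jmat p * shift_mat p) $$ (i,j))"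
    using assms by (simp add: special_B_def)
  also have "\<dots> = (if i < p then - shift_fun p (i+p) j else shift_fun p (i-p) j)"
    using assms by (simp del: index_mult_mat(1) add: index_Jmat_mult[OF shift_mat_carrier] index_shift_mat)
  finally show ?thesis .
qed

lemma special_B_skew: "special_B p \<in> skew_mats (2*p)"
  unfolding skew_mats_def by (auto intro!: eq_matI simp: index_special_B shift_fun_def cyc_succ_def)

lemma special_A_skew: "special_A p \<in> skew_mats (2*p)"
  unfolding skew_mats_def by (auto intro!: eq_matI simp: special_A_def)

lemma Jmat_mult_special_B: "Jmat p * special_B p = shift_mat p"
  by (rule eq_matI)
    (auto simp del: index_mult_mat(1) simp: index_Jmat_mult[OF special_B_carrier] index_special_B index_shift_mat)

lemma special_B_mult_Jmat: "special_B p * Jmat p = transpose_mat (shift_mat p)"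
  by (rule eq_matI)
    (auto simp del: index_mult_mat(1) simp: index_mult_Jmat[OF special_B_carrier] index_special_B
      index_shift_mat shift_fun_def)

lemma special_A_mult_Jmat: "special_A p * Jmat p = weight_mat p"
  by (rule eq_matI)
    (auto simp del: index_mult_mat(1) simp: index_mult_Jmat[OF special_A_carrier] index_special_A
      index_weight_mat weight_def)

lemma Jmat_mult_special_A: "Jmat p * special_A p = weight_mat p"
  by (rule eq_matI)
    (auto simp del: index_mult_mat(1) simp: index_Jmat_mult[OF special_A_carrier] index_special_A
      index_weight_mat weight_def)

lemma beta_special_B:
  assumes "X \<in> carrier_mat (2*p) (2*p)"
  shows "beta p X (special_B p) = X * shift_mat p - transpose_mat (shift_mat p) * X"
proof -
  have "X * Jmat p * special_B p = X * shift_mat p"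
    using assoc_mult_mat[OF assms Jmat_carrier special_B_carrier] Jmat_mult_special_B by simp
  then show ?thesis unfolding beta_def special_B_mult_Jmat by simp
qed

lemma beta_special_A:
  assumes "Y \<in> carrier_mat (2*p) (2*p)"
  shows "beta p (special_A p) Y = weight_mat p * Y - Y * weight_mat p"
proof -
  have "Y * Jmat p * special_A p = Y * weight_mat p"
    using assoc_mult_mat[OF assms Jmat_carrier special_A_carrier] Jmat_mult_special_A by simp
  then show ?thesis unfolding beta_def special_A_mult_Jmat by simp
qed

lemma index_weight_commutator:
  assumes "Y \<in> carrier_mat (2*p) (2*p)" "i < 2*p" "j < 2*p"
  shows "(weight_mat p * Y - Y * weight_mat p) $$ (i,j) = (weight p i - weight p j) * Y $$ (i,j)"
proof -
  have "(weight_mat p * Y) $$ (i,j) = (\<Sum>k<2*p. if k = i then weight p i * Y $$ (k,j) else 0)"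
    unfolding index_mult_mat_sum[OF weight_mat_carrier assms] using assms(2)
    by (intro sum.cong) (auto simp: index_weight_mat)
  moreover have "(Y * weight_mat p) $$ (i,j) = (\<Sum>k<2*p. if k = j then weight p j * Y $$ (i,k) else 0)"
    unfolding index_mult_mat_sum[OF assms(1) weight_mat_carrier assms(2,3)] using assms(3)
    by (intro sum.cong) (auto simp: index_weight_mat)
  ultimately show ?thesis
    using assms by (simp del: index_mult_mat(1) add: left_diff_distrib)
qed

lemma weight_eq_cases:
  assumes "i < 2*p" "j < 2*p" "weight p i = weight p j"
  shows "i = j \<or> j = i + p \<or> i = j + p"
  using assms by (auto simp: weight_def split: if_splits)

lemma cyc_succ_pred:
  assumes "4 \<le> p" "i < p"
  shows "cyc_succ p i < p" "cyc_pred p i < p"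
    "cyc_pred p (cyc_succ p i) = i" "cyc_succ p (cyc_pred p i) = i"
    "cyc_succ p (cyc_succ p i) \<noteq> i" "cyc_pred p (cyc_pred p i) \<noteq> i"
    "cyc_succ p i \<noteq> i" "cyc_pred p i \<noteq> i"
  using assms by (auto simp: cyc_succ_def cyc_pred_def)

lemma cyc_pred_consts:
  assumes "4 \<le> p"
  shows "cyc_pred p 2 = 1" "cyc_pred p 0 = p - 1" "p - 1 \<noteq> 2" "p - 1 \<noteq> 0"
  using assms by (auto simp: cyc_pred_def)

lemma sum_shift_fun_low:
  assumes "4 \<le> p" "i < p"
  shows "(\<Sum>k<2*p. h k * shift_fun p k i) =
    h (cyc_succ p i) + (if i = 2 then h p else 0) - (if i = 0 then h (2+p) else 0)"
proof -
  have "(\<Sum>k<p. h k * shift_fun p k i) = (\<Sum>k<p. if k = cyc_succ p i then h k else 0)"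
    using assms by (intro sum.cong) (auto simp: shift_fun_def)
  also have "\<dots> = h (cyc_succ p i)"
    using cyc_succ_pred[OF assms] by (simp add: sum.delta')
  finally have low: "(\<Sum>k<p. h k * shift_fun p k i) = h (cyc_succ p i)" .
  have "(\<Sum>k<p. h (k+p) * shift_fun p (k+p) i) =
      (\<Sum>k<p. (if k = 0 then (if i = 2 then h p else 0) else 0)
             - (if k = 2 then (if i = 0 then h (2+p) else 0) else 0))"
    using assms by (intro sum.cong) (auto simp: shift_fun_def)
  also have "\<dots> = (if i = 2 then h p else 0) - (if i = 0 then h (2+p) else 0)"
    using assms by (simp add: sum_subtractf sum.delta')
  finally show ?thesis
    unfolding sum_lessThan_double[where g = "\<lambda>k. h k * shift_fun p k i"] low by simp
qed

lemma sum_shift_fun_high: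
  assumes "4 \<le> p" "i < p"
  shows "(\<Sum>k<2*p. h k * shift_fun p k (i+p)) = h (cyc_pred p i + p)"
proof -
  have "(\<Sum>k<p. h k * shift_fun p k (i+p)) = 0"
    using assms by (intro sum.neutral) (auto simp: shift_fun_def)
  moreover have "(\<Sum>k<p. h (k+p) * shift_fun p (k+p) (i+p)) = (\<Sum>k<p. if k = cyc_pred p i then h (k+p) else 0)"
    using assms cyc_succ_pred[OF assms] by (intro sum.cong) (auto simp: shift_fun_def cyc_succ_def cyc_pred_def)
  moreover have "\<dots> = h (cyc_pred p i + p)"
    using cyc_succ_pred[OF assms] by (simp add: sum.delta')
  ultimately show ?thesis
    unfolding sum_lessThan_double[where g = "\<lambda>k. h k * shift_fun p k (i+p)"] by simp
qed

lemma index_beta_special_B: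
  assumes "X \<in> carrier_mat (2*p) (2*p)" "i < 2*p" "j < 2*p"
  shows "beta p X (special_B p) $$ (i,j) =
    (\<Sum>k<2*p. X $$ (i,k) * shift_fun p k j) - (\<Sum>k<2*p. X $$ (k,j) * shift_fun p k i)"
  using assms
  by (simp del: index_mult_mat(1) add: beta_special_B index_mult_mat_sum[OF assms(1) shift_mat_carrier]
      index_mult_mat_sum[OF transpose_carrier_mat[THEN iffD2, OF shift_mat_carrier] assms(1)]
      index_shift_mat mult.commute)

text \<open>The entries \<open>(i,i+p)\<close> of \<open>X M - M\<^sup>T X\<close> are differences of consecutive entries
  of the off-diagonal block of \<open>X\<close> along the cycle, so they telescope; the trace obstruction
  is absorbed by the corner \<open>E\<^sub>0\<^sub>2 - E\<^sub>2\<^sub>0\<close> of \<open>M\<close>, whence the correction at \<open>i = 0, 2\<close>.\<close>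

definition half_offdiag_trace :: "nat \<Rightarrow> complex mat \<Rightarrow> complex" where
  "half_offdiag_trace p S = (\<Sum>i<p. S $$ (i,i+p)) / 2"

definition offdiag_target :: "nat \<Rightarrow> complex mat \<Rightarrow> nat \<Rightarrow> complex" where
  "offdiag_target p S i =
     S $$ (i,i+p) - half_offdiag_trace p S * ((if i = 0 then 1 else 0) + (if i = 2 then 1 else 0))"

definition offdiag_partial :: "nat \<Rightarrow> complex mat \<Rightarrow> nat \<Rightarrow> complex" where
  "offdiag_partial p S k = - (\<Sum>m<k. offdiag_target p S m)"

definition solution_X_fun :: "nat \<Rightarrow> complex mat \<Rightarrow> nat \<Rightarrow> nat \<Rightarrow> complex" where
  "solution_X_fun p S i j =
    (if i < p then
       (if j < p then (if j = cyc_succ p i then S $$ (i,i) / 2 else 0) - (if i = cyc_succ p j then S $$ (j,j) / 2 else 0)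
        else if j - p = cyc_pred p i then offdiag_partial p S i else 0)
     else if j < p then - (if i - p = cyc_pred p j then offdiag_partial p S j else 0)
     else (if j - p = cyc_pred p (i-p) then S $$ (i,i) / 2 else 0)
          - (if i - p = cyc_pred p (j-p) then S $$ (j,j) / 2 else 0)
          + half_offdiag_trace p S * ((if i-p = 2 \<and> j-p = 0 then 1 else 0) - (if i-p = 0 \<and> j-p = 2 then 1 else 0)))"

definition solution_X :: "nat \<Rightarrow> complex mat \<Rightarrow> complex mat" where
  "solution_X p S = mat (2*p) (2*p) (\<lambda>(i,j). solution_X_fun p S i j)"

lemma solution_X_carrier[simp]: "solution_X p S \<in> carrier_mat (2*p) (2*p)"
  by (simp add: solution_X_def)

lemma solution_X_dim[simp]: "dim_row (solution_X p S) = 2*p" "dim_col (solution_X p S) = 2*p"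
  by (simp_all add: solution_X_def)

lemma index_solution_X: "i < 2*p \<Longrightarrow> j < 2*p \<Longrightarrow> solution_X p S $$ (i,j) = solution_X_fun p S i j"
  by (simp add: solution_X_def)

lemma solution_X_skew: "4 \<le> p \<Longrightarrow> solution_X p S \<in> skew_mats (2*p)"
  unfolding skew_mats_def by (auto intro!: eq_matI simp: solution_X_def solution_X_fun_def)

lemma sum_offdiag_target:
  assumes "4 \<le> p"
  shows "(\<Sum>m<p. offdiag_target p S m) = 0"
proof -
  have "(\<Sum>m<p. (if m = 0 then 1 else 0 :: complex)) = 1" "(\<Sum>m<p. (if m = 2 then 1 else 0 :: complex)) = 1"
    using assms by (simp_all add: sum.delta)
  then show ?thesis
    unfolding offdiag_target_def sum_subtractf sum_distrib_left[symmetric] sum.distrib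
    by (simp add: half_offdiag_trace_def)
qed

lemma offdiag_partial_step:
  assumes "4 \<le> p" "i < p"
  shows "offdiag_partial p S i - offdiag_partial p S (cyc_succ p i) = offdiag_target p S i"
proof (cases "Suc i < p")
  case True
  then show ?thesis by (simp add: offdiag_partial_def cyc_succ_def)
next
  case False
  then have i: "i = p - 1" "cyc_succ p i = 0" using assms by (auto simp: cyc_succ_def)
  have "(\<Sum>m<p. offdiag_target p S m) = (\<Sum>m<p-1. offdiag_target p S m) + offdiag_target p S (p-1)"
    using assms sum.lessThan_Suc[of "offdiag_target p S" "p-1"] by simp
  then have "- (\<Sum>m<p-1. offdiag_target p S m) = offdiag_target p S (p-1)"
    using sum_offdiag_target[OF assms(1), of S] by (metis minus_unique)
  then show ?thesis using i by (simp add: offdiag_partial_def)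
qed

lemma beta_solution_X_diag_low:
  assumes "4 \<le> p" "i < p"
  shows "beta p (solution_X p S) (special_B p) $$ (i,i) = S $$ (i,i)"
  using assms cyc_succ_pred[OF assms] cyc_pred_consts[OF assms(1)]
  by (simp add: index_beta_special_B sum_shift_fun_low index_solution_X solution_X_fun_def)

lemma beta_solution_X_diag_high:
  assumes "4 \<le> p" "i < p"
  shows "beta p (solution_X p S) (special_B p) $$ (i+p,i+p) = S $$ (i+p,i+p)"
  using assms cyc_succ_pred[OF assms] cyc_pred_consts[OF assms(1)]
  by (simp add: index_beta_special_B sum_shift_fun_high index_solution_X solution_X_fun_def) auto

lemma beta_solution_X_offdiag:
  assumes "4 \<le> p" "i < p"
  shows "beta p (solution_X p S) (special_B p) $$ (i,i+p) = S $$ (i,i+p)"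
  using assms cyc_succ_pred[OF assms] cyc_pred_consts[OF assms(1)] offdiag_partial_step[OF assms, of S]
  by (simp add: index_beta_special_B sum_shift_fun_high sum_shift_fun_low index_solution_X
      solution_X_fun_def offdiag_target_def) (auto simp: algebra_simps)

text \<open>The commutator with \<open>weight_mat p\<close> scales the entry \<open>(i,j)\<close> by \<open>weight p i - weight p j\<close>,
  so \<open>solution_Y\<close> matches all entries with distinct weights.\<close>

definition solution_Y :: "nat \<Rightarrow> complex mat \<Rightarrow> complex mat" where
  "solution_Y p S = mat (2*p) (2*p) (\<lambda>(i,j).
     if weight p i = weight p j then 0
     else (S $$ (i,j) - beta p (solution_X p S) (special_B p) $$ (i,j)) / (weight p i - weight p j))"

lemma solution_Y_carrier[simp]: "solution_Y p S \<in> carrier_mat (2*p) (2*p)"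
  by (simp add: solution_Y_def)

lemma solution_Y_dim[simp]: "dim_row (solution_Y p S) = 2*p" "dim_col (solution_Y p S) = 2*p"
  by (simp_all add: solution_Y_def)

lemma index_solution_Y:
  "i < 2*p \<Longrightarrow> j < 2*p \<Longrightarrow> solution_Y p S $$ (i,j) =
     (if weight p i = weight p j then 0
      else (S $$ (i,j) - beta p (solution_X p S) (special_B p) $$ (i,j)) / (weight p i - weight p j))"
  by (simp add: solution_Y_def)

lemma solution_Y_skew:
  assumes "4 \<le> p" "S \<in> sym_mats (2*p)"
  shows "solution_Y p S \<in> skew_mats (2*p)"
proof -
  have "transpose_mat (solution_Y p S) = - solution_Y p S"
  proof (rule eq_matI)
    fix i j assume "i < dim_row (- solution_Y p S)" "j < dim_col (- solution_Y p S)"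
    then have ij: "i < 2*p" "j < 2*p" by auto
    have swap: "x / (weight p j - weight p i) = - (x / (weight p i - weight p j))" for x
      by (metis divide_minus_right minus_diff_eq)
    show "transpose_mat (solution_Y p S) $$ (i, j) = (- solution_Y p S) $$ (i, j)"
      using ij sym_mats_entry[OF assms(2) ij] beta_entry_sym[OF solution_X_skew[OF assms(1)] special_B_skew ij]
      by (simp add: index_solution_Y eq_commute[of "weight p j" "weight p i"] swap)
  qed auto
  then show ?thesis by (simp add: skew_mats_def)
qed

theorem dbeta_surjective_special:
  assumes "4 \<le> p"
  shows "dbeta_surjective p (special_A p) (special_B p)"
  unfolding dbeta_surjective_def
proof
  fix S assume S: "S \<in> sym_mats (2*p)"
  then have Sc: "S \<in> carrier_mat (2*p) (2*p)" by (simp add: sym_mats_def)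
  let ?X = "solution_X p S" and ?Y = "solution_Y p S"
  let ?L = "beta p ?X (special_B p)"
  have "dbeta p (special_A p) (special_B p) ?X ?Y $$ (i,j) = S $$ (i,j)" if ij: "i < 2*p" "j < 2*p" for i j
  proof -
    have "?L \<in> carrier_mat (2*p) (2*p)" by (simp add: beta_carrier)
    then have "dbeta p (special_A p) (special_B p) ?X ?Y $$ (i,j) = ?L $$ (i,j) + (weight p i - weight p j) * ?Y $$ (i,j)"
      using ij index_weight_commutator[OF solution_Y_carrier ij]
      by (simp del: index_mult_mat(1) index_minus_mat(1) add: dbeta_def beta_special_A)
    also have "\<dots> = S $$ (i,j)"
    proof (cases "weight p i = weight p j")
      case False
      then show ?thesis using ij by (simp add: index_solution_Y)
    next
      case True
      then consider "i = j" "i < p" | "i = j" "p \<le> i" | "j = i + p" | "i = j + p"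
        using weight_eq_cases[OF ij True] by linarith
      then show ?thesis
      proof cases
        case 1 then show ?thesis using beta_solution_X_diag_low[OF assms 1(2)] by simp
      next
        case 2 then show ?thesis using beta_solution_X_diag_high[OF assms, of "i - p" S] ij by simp
      next
        case 3 then show ?thesis using beta_solution_X_offdiag[OF assms, of i S] ij True by simp
      next
        case 4 then show ?thesis
          using beta_solution_X_offdiag[OF assms, of j S] ij True sym_mats_entry[OF S ij]
            beta_entry_sym[OF solution_X_skew[OF assms] special_B_skew ij] by simp
      qed
    qed
    finally show ?thesis .
  qed
  moreover have "dbeta p (special_A p) (special_B p) ?X ?Y \<in> carrier_mat (2*p) (2*p)"
    by (simp add: dbeta_carrier)
  ultimately have "dbeta p (special_A p) (special_B p) ?X ?Y = S"
    using Sc by (intro eq_matI) auto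
  then show "\<exists>X\<in>skew_mats (2*p). \<exists>Y\<in>skew_mats (2*p). dbeta p (special_A p) (special_B p) X Y = S"
    using solution_X_skew[OF assms] solution_Y_skew[OF assms S] by blast
qed

section \<open>Gram determinants detecting surjectivity\<close>

text \<open>For a matrix \<open>K\<close> with rows indexed by \<open>r < N\<close>, \<open>gram_mat N Q C K\<close> is \<open>K K\<^sup>T\<close> plus the
  identity on the rows outside \<open>Q\<close>. It is polynomial in \<open>K\<close>; for real \<open>K\<close> it is positive
  definite exactly when the rows in \<open>Q\<close> are linearly independent, which avoids the complex
  conjugation in \<open>K K\<^sup>*\<close>.\<close>

definition gram_mat :: "nat \<Rightarrow> (nat \<Rightarrow> bool) \<Rightarrow> 'c set \<Rightarrow> (nat \<Rightarrow> 'c \<Rightarrow> complex) \<Rightarrow> complex mat" where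
  "gram_mat N Q C K = mat N N (\<lambda>(r,r'). (\<Sum>c\<in>C. K r c * K r' c) + (if r = r' \<and> \<not> Q r then 1 else 0))"

definition rows_surjective :: "nat \<Rightarrow> (nat \<Rightarrow> bool) \<Rightarrow> 'c set \<Rightarrow> (nat \<Rightarrow> 'c \<Rightarrow> complex) \<Rightarrow> bool" where
  "rows_surjective N Q C K \<longleftrightarrow> (\<forall>t. \<exists>u. \<forall>r<N. Q r \<longrightarrow> (\<Sum>c\<in>C. u c * K r c) = t r)"

lemma gram_mat_carrier[simp]: "gram_mat N Q C K \<in> carrier_mat N N"
  by (simp add: gram_mat_def)

lemma gram_mat_mult_vec:
  assumes "v \<in> carrier_vec N" "r < N"
  shows "(gram_mat N Q C K *\<^sub>v v) $ r = (\<Sum>c\<in>C. K r c * (\<Sum>r'<N. K r' c * v $ r')) + (if Q r then 0 else v $ r)"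
proof -
  have "(gram_mat N Q C K *\<^sub>v v) $ r =
      (\<Sum>r'<N. (\<Sum>c\<in>C. K r c * K r' c) * v $ r' + (if r' = r then (if Q r then 0 else v $ r) else 0))"
    unfolding index_mult_mat_vec_sum[OF gram_mat_carrier assms]
    using assms(2) by (intro sum.cong) (auto simp: gram_mat_def distrib_right)
  also have "\<dots> = (\<Sum>c\<in>C. K r c * (\<Sum>r'<N. K r' c * v $ r')) + (if Q r then 0 else v $ r)"
    unfolding sum.distrib sum_distrib_left sum_distrib_right using assms(2)
    by (subst sum.swap) (simp add: ac_simps)
  finally show ?thesis .
qed

lemma rows_surjective_if_det_gram_mat:
  assumes "det (gram_mat N Q C K) \<noteq> 0"
  shows "rows_surjective N Q C K"
  unfolding rows_surjective_def
proof
  fix t :: "nat \<Rightarrow> complex"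
  let ?G = "gram_mat N Q C K"
  obtain G' where G': "G' \<in> carrier_mat N N" and GG': "?G * G' = 1\<^sub>m N"
    using det_non_zero_imp_unit[OF gram_mat_carrier assms, unfolded Units_def, of "()"]
    by (auto simp: ring_mat_def)
  define s where "s = vec N (\<lambda>r. if Q r then t r else 0)"
  define w where "w = G' *\<^sub>v s"
  have s: "s \<in> carrier_vec N" and w: "w \<in> carrier_vec N"
    by (simp_all add: s_def w_def mult_mat_vec_carrier[OF G'])
  have Gw: "?G *\<^sub>v w = s"
    unfolding w_def using assoc_mult_mat_vec[OF gram_mat_carrier[of N Q C K] G' s, symmetric] GG' s by simp
  show "\<exists>u. \<forall>r<N. Q r \<longrightarrow> (\<Sum>c\<in>C. u c * K r c) = t r"
  proof (intro exI allI impI)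
    fix r assume "r < N" "Q r"
    then show "(\<Sum>c\<in>C. (\<Sum>r'<N. K r' c * w $ r') * K r c) = t r"
      using gram_mat_mult_vec[OF w \<open>r < N\<close>, of Q C K] Gw by (simp add: s_def mult.commute)
  qed
qed

lemma sum_cmod_square_eq_0:
  assumes "finite A" "(\<Sum>x\<in>A. (cmod (f x))\<^sup>2) = 0" "x \<in> A"
  shows "f x = 0"
  using assms sum_nonneg_eq_0_iff[of A "\<lambda>x. (cmod (f x))\<^sup>2"] by auto

lemma gram_mat_quadratic_form:
  assumes "\<And>r c. r < N \<Longrightarrow> K r c \<in> \<real>" "v \<in> carrier_vec N"
  shows "(\<Sum>r<N. cnj (v $ r) * (gram_mat N Q C K *\<^sub>v v) $ r) =
    of_real ((\<Sum>c\<in>C. (cmod (\<Sum>r<N. K r c * v $ r))\<^sup>2) + (\<Sum>r<N. if Q r then 0 else (cmod (v $ r))\<^sup>2))"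
proof -
  define a where "a c = (\<Sum>r<N. K r c * v $ r)" for c
  have cnj_a: "cnj (a c) = (\<Sum>r<N. K r c * cnj (v $ r))" for c
    unfolding a_def using assms(1) by (simp add: Reals_cnj_iff)
  have "(\<Sum>r<N. cnj (v $ r) * (gram_mat N Q C K *\<^sub>v v) $ r) =
      (\<Sum>r<N. \<Sum>c\<in>C. (K r c * cnj (v $ r)) * a c) + (\<Sum>r<N. if Q r then 0 else cnj (v $ r) * v $ r)"
    unfolding sum.distrib[symmetric] a_def using assms(2)
    by (intro sum.cong) (simp_all add: gram_mat_mult_vec distrib_left sum_distrib_left ac_simps)
  also have "(\<Sum>r<N. \<Sum>c\<in>C. (K r c * cnj (v $ r)) * a c) = (\<Sum>c\<in>C. cnj (a c) * a c)"
    unfolding cnj_a sum_distrib_right by (rule sum.swap)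
  also have "(\<Sum>c\<in>C. cnj (a c) * a c) + (\<Sum>r<N. if Q r then 0 else cnj (v $ r) * v $ r) =
      (\<Sum>c\<in>C. of_real ((cmod (a c))\<^sup>2)) + (\<Sum>r<N. of_real (if Q r then 0 else (cmod (v $ r))\<^sup>2))"
    by (intro arg_cong2[where f = "(+)"] sum.cong) (simp_all add: mult.commute complex_norm_square[symmetric])
  finally show ?thesis
    unfolding a_def of_real_add of_real_sum .
qed

lemma det_gram_mat_nonzero:
  assumes "finite C" "\<And>r c. r < N \<Longrightarrow> K r c \<in> \<real>" "rows_surjective N Q C K"
  shows "det (gram_mat N Q C K) \<noteq> 0"
proof
  assume "det (gram_mat N Q C K) = 0"
  then obtain v where v: "v \<in> carrier_vec N" "v \<noteq> 0\<^sub>v N" and Gv: "gram_mat N Q C K *\<^sub>v v = 0\<^sub>v N"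
    using det_0_iff_vec_prod_zero[OF gram_mat_carrier] by blast
  define a where "a c = (\<Sum>r<N. K r c * v $ r)" for c
  have "of_real ((\<Sum>c\<in>C. (cmod (a c))\<^sup>2) + (\<Sum>r<N. if Q r then 0 else (cmod (v $ r))\<^sup>2))
      = (\<Sum>r<N. cnj (v $ r) * (gram_mat N Q C K *\<^sub>v v) $ r)"
    unfolding a_def by (rule gram_mat_quadratic_form[symmetric]) (use assms(2) v(1) in auto)
  also have "\<dots> = 0"
    using Gv v(1) by simp
  finally have "of_real ((\<Sum>c\<in>C. (cmod (a c))\<^sup>2) + (\<Sum>r<N. if Q r then 0 else (cmod (v $ r))\<^sup>2)) = (0 :: complex)" .
  moreover have "0 \<le> (\<Sum>c\<in>C. (cmod (a c))\<^sup>2)" "0 \<le> (\<Sum>r<N. if Q r then 0 else (cmod (v $ r))\<^sup>2)"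
    by (simp_all add: sum_nonneg)
  ultimately have "(\<Sum>c\<in>C. (cmod (a c))\<^sup>2) = 0" "(\<Sum>r<N. if Q r then 0 else (cmod (v $ r))\<^sup>2) = 0"
    unfolding of_real_eq_0_iff by linarith+
  then have a0: "\<And>c. c \<in> C \<Longrightarrow> a c = 0" and v_out: "\<And>r. r < N \<Longrightarrow> \<not> Q r \<Longrightarrow> v $ r = 0"
    using sum_cmod_square_eq_0[OF assms(1)] sum_nonneg_eq_0_iff[of "{..<N}" "\<lambda>r. if Q r then 0 else (cmod (v $ r))\<^sup>2"]
    by (auto split: if_splits)
  obtain u where u: "\<And>r. r < N \<Longrightarrow> Q r \<Longrightarrow> (\<Sum>c\<in>C. u c * K r c) = cnj (v $ r)"
    using assms(3) unfolding rows_surjective_def by meson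
  have "0 = (\<Sum>c\<in>C. u c * a c)" using a0 by simp
  also have "\<dots> = (\<Sum>r<N. v $ r * (\<Sum>c\<in>C. u c * K r c))"
    unfolding a_def sum_distrib_left sum_distrib_right by (subst sum.swap) (simp add: ac_simps)
  also have "\<dots> = of_real (\<Sum>r<N. if Q r then (cmod (v $ r))\<^sup>2 else 0)"
    unfolding of_real_sum using u v_out by (intro sum.cong) (auto simp: complex_norm_square[symmetric])
  finally have "(\<Sum>r<N. if Q r then (cmod (v $ r))\<^sup>2 else 0) = 0"
    by (metis of_real_eq_0_iff)
  then have "(if Q r then (cmod (v $ r))\<^sup>2 else 0) = 0" if "r < N" for r
    using that sum_nonneg_eq_0_iff[of "{..<N}" "\<lambda>r. if Q r then (cmod (v $ r))\<^sup>2 else 0"] by simp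
  then have "v $ r = 0" if "r < N" "Q r" for r
    using that by (metis (full_types) norm_eq_zero power_not_zero)
  then have "v = 0\<^sub>v N"
    using v(1) v_out by (intro eq_vecI) auto
  with v(2) show False ..
qed

section \<open>The Jacobian of the differential\<close>

definition lin_comb_mat :: "nat \<Rightarrow> 'c set \<Rightarrow> ('c \<Rightarrow> complex) \<Rightarrow> ('c \<Rightarrow> complex mat) \<Rightarrow> complex mat" where
  "lin_comb_mat n C u F = mat n n (\<lambda>(i,j). \<Sum>c\<in>C. u c * F c $$ (i,j))"

lemma lin_comb_mat_carrier[simp]: "lin_comb_mat n C u F \<in> carrier_mat n n"
  by (simp add: lin_comb_mat_def)

lemma lin_comb_mat_dim[simp]: "dim_row (lin_comb_mat n C u F) = n" "dim_col (lin_comb_mat n C u F) = n"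
  by (simp_all add: lin_comb_mat_def)

lemma index_lin_comb_mat:
  "i < n \<Longrightarrow> j < n \<Longrightarrow> lin_comb_mat n C u F $$ (i,j) = (\<Sum>c\<in>C. u c * F c $$ (i,j))"
  by (simp add: lin_comb_mat_def)

lemma index_lin_comb_mat_mult:
  assumes "U \<in> carrier_mat n n" "\<And>c. F c \<in> carrier_mat n n" "i < n" "j < n"
  shows "(lin_comb_mat n C u F * U) $$ (i,j) = (\<Sum>c\<in>C. u c * (F c * U) $$ (i,j))"
proof -
  have "(lin_comb_mat n C u F * U) $$ (i,j) = (\<Sum>k<n. \<Sum>c\<in>C. u c * (F c $$ (i,k) * U $$ (k,j)))"
    unfolding index_mult_mat_sum[OF lin_comb_mat_carrier assms(1,3,4)]
    using assms by (intro sum.cong refl) (simp add: index_lin_comb_mat sum_distrib_right mult.assoc)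
  also have "\<dots> = (\<Sum>c\<in>C. u c * (F c * U) $$ (i,j))"
    by (subst sum.swap) (simp add: sum_distrib_left index_mult_mat_sum[OF assms(2) assms(1,3,4)])
  finally show ?thesis .
qed

lemma index_mult_lin_comb_mat:
  assumes "U \<in> carrier_mat n n" "\<And>c. F c \<in> carrier_mat n n" "i < n" "j < n"
  shows "(U * lin_comb_mat n C u F) $$ (i,j) = (\<Sum>c\<in>C. u c * (U * F c) $$ (i,j))"
proof -
  have "(U * lin_comb_mat n C u F) $$ (i,j) = (\<Sum>k<n. \<Sum>c\<in>C. u c * (U $$ (i,k) * F c $$ (k,j)))"
    unfolding index_mult_mat_sum[OF assms(1) lin_comb_mat_carrier assms(3,4)]
    using assms by (intro sum.cong refl) (simp add: index_lin_comb_mat sum_distrib_left mult.left_commute)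
  also have "\<dots> = (\<Sum>c\<in>C. u c * (U * F c) $$ (i,j))"
    by (subst sum.swap) (simp add: sum_distrib_left index_mult_mat_sum[OF assms(1) assms(2) assms(3,4)])
  finally show ?thesis .
qed

lemma index_beta_linear_fst:
  assumes "X \<in> carrier_mat (2*p) (2*p)" "B \<in> carrier_mat (2*p) (2*p)" "i < 2*p" "j < 2*p"
  shows "beta p X B $$ (i,j) = (X * (Jmat p * B)) $$ (i,j) - ((B * Jmat p) * X) $$ (i,j)"
proof -
  have "X * Jmat p * B = X * (Jmat p * B)"
    using assoc_mult_mat[OF assms(1) Jmat_carrier assms(2)] .
  moreover have "B * Jmat p * X \<in> carrier_mat (2*p) (2*p)"
    using assms by (meson Jmat_carrier mult_carrier_mat)
  ultimately show ?thesis
    unfolding beta_def using assms by (simp del: index_mult_mat(1))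
qed

lemma index_beta_linear_snd:
  assumes "A \<in> carrier_mat (2*p) (2*p)" "Y \<in> carrier_mat (2*p) (2*p)" "i < 2*p" "j < 2*p"
  shows "beta p A Y $$ (i,j) = ((A * Jmat p) * Y) $$ (i,j) - (Y * (Jmat p * A)) $$ (i,j)"
proof -
  have "Y * Jmat p * A = Y * (Jmat p * A)"
    using assoc_mult_mat[OF assms(2) Jmat_carrier assms(1)] .
  moreover have "A * Jmat p * Y \<in> carrier_mat (2*p) (2*p)"
    using assms by (meson Jmat_carrier mult_carrier_mat)
  ultimately show ?thesis
    unfolding beta_def using assms by (simp del: index_mult_mat(1))
qed

lemma index_dbeta_lin_comb_mat:
  assumes "A \<in> carrier_mat (2*p) (2*p)" "B \<in> carrier_mat (2*p) (2*p)"
    "\<And>c. F c \<in> carrier_mat (2*p) (2*p)" "\<And>c. G c \<in> carrier_mat (2*p) (2*p)" "i < 2*p" "j < 2*p"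
  shows "dbeta p A B (lin_comb_mat (2*p) C u F) (lin_comb_mat (2*p) C u G) $$ (i,j) =
    (\<Sum>c\<in>C. u c * dbeta p A B (F c) (G c) $$ (i,j))"
proof -
  have JB: "Jmat p * B \<in> carrier_mat (2*p) (2*p)" "B * Jmat p \<in> carrier_mat (2*p) (2*p)"
    "Jmat p * A \<in> carrier_mat (2*p) (2*p)" "A * Jmat p \<in> carrier_mat (2*p) (2*p)"
    using assms by (meson Jmat_carrier mult_carrier_mat)+
  have dbeta_entry: "dbeta p A B X Y $$ (i,j) = beta p X B $$ (i,j) + beta p A Y $$ (i,j)"
    if "X \<in> carrier_mat (2*p) (2*p)" "Y \<in> carrier_mat (2*p) (2*p)" for X Y
    using that assms beta_carrier[of X p B] beta_carrier[of A p Y] by (simp add: dbeta_def)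
  have "dbeta p A B (lin_comb_mat (2*p) C u F) (lin_comb_mat (2*p) C u G) $$ (i,j) =
      (\<Sum>c\<in>C. u c * (F c * (Jmat p * B)) $$ (i,j)) - (\<Sum>c\<in>C. u c * ((B * Jmat p) * F c) $$ (i,j))
      + ((\<Sum>c\<in>C. u c * ((A * Jmat p) * G c) $$ (i,j)) - (\<Sum>c\<in>C. u c * (G c * (Jmat p * A)) $$ (i,j)))"
    unfolding dbeta_entry[OF lin_comb_mat_carrier lin_comb_mat_carrier]
      index_beta_linear_fst[OF lin_comb_mat_carrier assms(2,5,6)]
      index_beta_linear_snd[OF assms(1) lin_comb_mat_carrier assms(5,6)]
      index_lin_comb_mat_mult[OF JB(1) assms(3,5,6)] index_mult_lin_comb_mat[OF JB(2) assms(3,5,6)]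
      index_mult_lin_comb_mat[OF JB(4) assms(4,5,6)] index_lin_comb_mat_mult[OF JB(3) assms(4,5,6)] ..
  also have "\<dots> = (\<Sum>c\<in>C. u c * dbeta p A B (F c) (G c) $$ (i,j))"
    unfolding dbeta_entry[OF assms(3,4)] index_beta_linear_fst[OF assms(3,2,5,6)]
      index_beta_linear_snd[OF assms(1,4,5,6)]
    by (simp add: sum_subtractf[symmetric] sum.distrib[symmetric] algebra_simps)
  finally show ?thesis .
qed

lemma lin_comb_mat_skew:
  assumes "\<And>c. F c \<in> skew_mats n"
  shows "lin_comb_mat n C u F \<in> skew_mats n"
proof -
  have "transpose_mat (lin_comb_mat n C u F) = - lin_comb_mat n C u F"
  proof (rule eq_matI)
    fix i j assume "i < dim_row (- lin_comb_mat n C u F)" "j < dim_col (- lin_comb_mat n C u F)"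
    then have ij: "i < n" "j < n" by auto
    then show "transpose_mat (lin_comb_mat n C u F) $$ (i,j) = (- lin_comb_mat n C u F) $$ (i,j)"
      by (simp add: index_lin_comb_mat skew_mats_entry[OF assms ij] sum_negf[symmetric])
  qed auto
  then show ?thesis by (simp add: skew_mats_def)
qed

definition skew_unit :: "nat \<Rightarrow> nat \<Rightarrow> nat \<Rightarrow> complex mat" where
  "skew_unit n a b = mat n n (\<lambda>(i,j). (if i = a \<and> j = b then 1 else 0) - (if i = b \<and> j = a then 1 else 0))"

text \<open>The pairs \<open>(False,a,b) \<mapsto> (E\<^sub>a\<^sub>b - E\<^sub>b\<^sub>a, 0)\<close> and \<open>(True,a,b) \<mapsto> (0, E\<^sub>a\<^sub>b - E\<^sub>b\<^sub>a)\<close>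
  span the tangent space \<open>\<Lambda>\<^sup>2V \<times> \<Lambda>\<^sup>2V\<close>.\<close>

definition pair_index :: "nat \<Rightarrow> (bool \<times> nat \<times> nat) set" where
  "pair_index n = UNIV \<times> ({..<n} \<times> {..<n})"

definition pair_unit_X :: "nat \<Rightarrow> bool \<times> nat \<times> nat \<Rightarrow> complex mat" where
  "pair_unit_X n c = (if fst c then 0\<^sub>m n n else skew_unit n (fst (snd c)) (snd (snd c)))"

definition pair_unit_Y :: "nat \<Rightarrow> bool \<times> nat \<times> nat \<Rightarrow> complex mat" where
  "pair_unit_Y n c = (if fst c then skew_unit n (fst (snd c)) (snd (snd c)) else 0\<^sub>m n n)"

lemma pair_index_finite[simp]: "finite (pair_index n)"
  by (simp add: pair_index_def)

lemma index_skew_unit: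
  "i < n \<Longrightarrow> j < n \<Longrightarrow> skew_unit n a b $$ (i,j) = (if i = a \<and> j = b then 1 else 0) - (if i = b \<and> j = a then 1 else 0)"
  by (simp add: skew_unit_def)

lemma skew_unit_skew: "skew_unit n a b \<in> skew_mats n"
  unfolding skew_mats_def
proof (intro CollectI conjI)
  show "transpose_mat (skew_unit n a b) = - skew_unit n a b"
  proof (rule eq_matI)
    fix i j assume "i < dim_row (- skew_unit n a b)" "j < dim_col (- skew_unit n a b)"
    then have ij: "i < n" "j < n" by (auto simp: skew_unit_def)
    have "transpose_mat (skew_unit n a b) $$ (i,j) = skew_unit n a b $$ (j,i)"
      using ij by (simp add: skew_unit_def)
    also have "\<dots> = - skew_unit n a b $$ (i,j)"
      unfolding index_skew_unit[OF ij] index_skew_unit[OF ij(2,1)]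
      by (simp only: conj_commute[of "j = a"] conj_commute[of "j = b"] minus_diff_eq)
    also have "\<dots> = (- skew_unit n a b) $$ (i,j)"
      using ij by (simp add: skew_unit_def)
    finally show "transpose_mat (skew_unit n a b) $$ (i,j) = (- skew_unit n a b) $$ (i,j)" .
  qed (auto simp: skew_unit_def)
qed (simp add: skew_unit_def)

lemma pair_unit_X_carrier[simp]: "pair_unit_X n c \<in> carrier_mat n n"
  by (simp add: pair_unit_X_def skew_unit_def)

lemma pair_unit_Y_carrier[simp]: "pair_unit_Y n c \<in> carrier_mat n n"
  by (simp add: pair_unit_Y_def skew_unit_def)

lemma pair_unit_X_skew: "pair_unit_X n c \<in> skew_mats n"
  by (simp add: pair_unit_X_def skew_unit_skew zero_skew_mats)

lemma pair_unit_Y_skew: "pair_unit_Y n c \<in> skew_mats n"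
  by (simp add: pair_unit_Y_def skew_unit_skew zero_skew_mats)

lemma sum_pair_index:
  "(\<Sum>c\<in>pair_index n. g c) = (\<Sum>a<n. \<Sum>b<n. g (False,a,b)) + (\<Sum>a<n. \<Sum>b<n. g (True,a,b))"
proof -
  have "(\<Sum>c\<in>pair_index n. g c) = (\<Sum>s\<in>UNIV. \<Sum>ab\<in>{..<n}\<times>{..<n}. g (s,ab))"
    unfolding pair_index_def by (rule sum.cartesian_product')
  also have "\<dots> = (\<Sum>ab\<in>{..<n}\<times>{..<n}. g (False,ab)) + (\<Sum>ab\<in>{..<n}\<times>{..<n}. g (True,ab))"
    by (simp add: UNIV_bool)
  finally show ?thesis
    by (simp only: sum.cartesian_product')
qed

lemma double_sum_delta:
  fixes h :: "nat \<Rightarrow> nat \<Rightarrow> 'a::comm_monoid_add"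
  assumes "i < n" "j < n"
  shows "(\<Sum>a<n. \<Sum>b<n. if a = i then if b = j then h a b else 0 else 0) = h i j"
proof -
  have "(\<Sum>b<n. if a = i then if b = j then h a b else 0 else 0) = (if a = i then h a j else 0)" for a
    using assms by (simp add: sum.delta)
  then show ?thesis using assms by simp
qed

lemma sum_skew_unit_coeffs:
  assumes "X \<in> skew_mats n" "i < n" "j < n"
  shows "(\<Sum>a<n. \<Sum>b<n. X $$ (a,b) / 2 * skew_unit n a b $$ (i,j)) = X $$ (i,j)"
proof -
  have "X $$ (a,b) / 2 * skew_unit n a b $$ (i,j) =
      (if a = i then if b = j then X $$ (a,b) / 2 else 0 else 0) - (if a = j then if b = i then X $$ (a,b) / 2 else 0 else 0)"
    for a b using assms(2,3) by (auto simp: index_skew_unit)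
  then have "(\<Sum>a<n. \<Sum>b<n. X $$ (a,b) / 2 * skew_unit n a b $$ (i,j)) =
      (\<Sum>a<n. \<Sum>b<n. if a = i then if b = j then X $$ (a,b) / 2 else 0 else 0)
      - (\<Sum>a<n. \<Sum>b<n. if a = j then if b = i then X $$ (a,b) / 2 else 0 else 0)"
    by (simp only: sum_subtractf)
  also have "\<dots> = X $$ (i,j) / 2 - X $$ (j,i) / 2"
    by (simp only: double_sum_delta[OF assms(2,3)] double_sum_delta[OF assms(3,2)])
  also have "\<dots> = X $$ (i,j)"
    using skew_mats_entry[OF assms] by simp
  finally show ?thesis .
qed

lemma lin_comb_pair_units:
  assumes "X \<in> skew_mats n" "Y \<in> skew_mats n"
  defines "u \<equiv> \<lambda>c. (if fst c then Y else X) $$ (fst (snd c), snd (snd c)) / 2"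
  shows "lin_comb_mat n (pair_index n) u (pair_unit_X n) = X"
    and "lin_comb_mat n (pair_index n) u (pair_unit_Y n) = Y"
proof -
  have c: "X \<in> carrier_mat n n" "Y \<in> carrier_mat n n"
    using assms(1,2) skew_matsD by blast+
  have "(\<Sum>c\<in>pair_index n. u c * pair_unit_X n c $$ (i,j)) = X $$ (i,j)"
    "(\<Sum>c\<in>pair_index n. u c * pair_unit_Y n c $$ (i,j)) = Y $$ (i,j)" if "i < n" "j < n" for i j
    unfolding sum_pair_index using that sum_skew_unit_coeffs[OF assms(1) that] sum_skew_unit_coeffs[OF assms(2) that]
    by (simp_all add: u_def pair_unit_X_def pair_unit_Y_def)
  then show "lin_comb_mat n (pair_index n) u (pair_unit_X n) = X"
    "lin_comb_mat n (pair_index n) u (pair_unit_Y n) = Y"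
    using c by (auto intro!: eq_matI simp: index_lin_comb_mat)
qed

definition upper_index :: "nat \<Rightarrow> nat \<Rightarrow> bool" where
  "upper_index n r \<longleftrightarrow> r div n \<le> r mod n"

text \<open>Row \<open>r\<close> is the matrix entry \<open>(r div 2p, r mod 2p)\<close>; only the rows with \<open>upper_index\<close>
  matter, as \<open>dbeta\<close> takes symmetric values.\<close>

definition jacobian :: "nat \<Rightarrow> complex mat \<Rightarrow> complex mat \<Rightarrow> nat \<Rightarrow> bool \<times> nat \<times> nat \<Rightarrow> complex" where
  "jacobian p A B r c = dbeta p A B (pair_unit_X (2*p) c) (pair_unit_Y (2*p) c) $$ (r div (2*p), r mod (2*p))"

lemma index_encode:
  fixes i j n :: nat
  assumes "i < n" "j < n"
  shows "i*n + j < n*n" "(i*n + j) div n = i" "(i*n + j) mod n = j"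
proof -
  show "(i*n + j) div n = i" "(i*n + j) mod n = j" using assms by auto
  have "i*n + j < Suc i * n" using assms by simp
  also have "\<dots> \<le> n*n" using assms(1) by (intro mult_le_mono1) simp
  finally show "i*n + j < n*n" .
qed

lemma index_decode:
  fixes r n :: nat
  assumes "r < n*n"
  shows "r div n < n" "r mod n < n"
proof -
  show "r div n < n" using assms by (simp add: less_mult_imp_div_less)
  have "0 < n" using assms by (cases n) auto
  then show "r mod n < n" by simp
qed

lemma sum_jacobian:
  assumes "A \<in> carrier_mat (2*p) (2*p)" "B \<in> carrier_mat (2*p) (2*p)" "r < 2*p*(2*p)"
  shows "(\<Sum>c\<in>pair_index (2*p). u c * jacobian p A B r c) =
    dbeta p A B (lin_comb_mat (2*p) (pair_index (2*p)) u (pair_unit_X (2*p)))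
      (lin_comb_mat (2*p) (pair_index (2*p)) u (pair_unit_Y (2*p))) $$ (r div (2*p), r mod (2*p))"
  unfolding jacobian_def using index_decode[OF assms(3)]
  by (intro index_dbeta_lin_comb_mat[symmetric] assms pair_unit_X_carrier pair_unit_Y_carrier)

lemma rows_surjective_jacobian:
  assumes A: "A \<in> skew_mats (2*p)" and B: "B \<in> skew_mats (2*p)" and surj: "dbeta_surjective p A B"
  shows "rows_surjective (2*p*(2*p)) (upper_index (2*p)) (pair_index (2*p)) (jacobian p A B)"
  unfolding rows_surjective_def
proof
  fix t :: "nat \<Rightarrow> complex"
  let ?n = "2*p"
  have Ac: "A \<in> carrier_mat ?n ?n" and Bc: "B \<in> carrier_mat ?n ?n"
    using A B skew_matsD by blast+
  define S where "S = mat ?n ?n (\<lambda>(i,j). if i \<le> j then t (i*?n + j) else t (j*?n + i))"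
  have "S \<in> sym_mats ?n"
    unfolding sym_mats_def S_def by (auto intro!: eq_matI)
  then obtain X Y where X: "X \<in> skew_mats ?n" and Y: "Y \<in> skew_mats ?n" and XY: "dbeta p A B X Y = S"
    using surj unfolding dbeta_surjective_def by blast
  define u where "u c = (if fst c then Y else X) $$ (fst (snd c), snd (snd c)) / 2" for c
  show "\<exists>u. \<forall>r<?n*?n. upper_index ?n r \<longrightarrow> (\<Sum>c\<in>pair_index ?n. u c * jacobian p A B r c) = t r"
  proof (intro exI allI impI)
    fix r assume r: "r < ?n*?n" "upper_index ?n r"
    have "(\<Sum>c\<in>pair_index ?n. u c * jacobian p A B r c) = S $$ (r div ?n, r mod ?n)"
      unfolding sum_jacobian[OF Ac Bc r(1)] lin_comb_pair_units[OF X Y, folded u_def] XY ..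
    also have "\<dots> = t (r div ?n * ?n + r mod ?n)"
      using index_decode[OF r(1)] r(2) by (simp add: S_def upper_index_def)
    also have "r div ?n * ?n + r mod ?n = r"
      by (rule div_mult_mod_eq)
    finally show "(\<Sum>c\<in>pair_index ?n. u c * jacobian p A B r c) = t r" .
  qed
qed

lemma dbeta_surjective_if_rows_surjective:
  assumes A: "A \<in> skew_mats (2*p)" and B: "B \<in> skew_mats (2*p)"
    and surj: "rows_surjective (2*p*(2*p)) (upper_index (2*p)) (pair_index (2*p)) (jacobian p A B)"
  shows "dbeta_surjective p A B"
  unfolding dbeta_surjective_def
proof
  let ?n = "2*p"
  have Ac: "A \<in> carrier_mat ?n ?n" and Bc: "B \<in> carrier_mat ?n ?n"
    using A B skew_matsD by blast+
  fix S assume S: "S \<in> sym_mats ?n"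
  then have Sc: "S \<in> carrier_mat ?n ?n" by (simp add: sym_mats_def)
  obtain u where u: "\<And>r. r < ?n*?n \<Longrightarrow> upper_index ?n r \<Longrightarrow>
      (\<Sum>c\<in>pair_index ?n. u c * jacobian p A B r c) = S $$ (r div ?n, r mod ?n)"
    using spec[OF surj[unfolded rows_surjective_def], of "\<lambda>r. S $$ (r div ?n, r mod ?n)"] by blast
  define X where "X = lin_comb_mat ?n (pair_index ?n) u (pair_unit_X ?n)"
  define Y where "Y = lin_comb_mat ?n (pair_index ?n) u (pair_unit_Y ?n)"
  have X: "X \<in> skew_mats ?n" and Y: "Y \<in> skew_mats ?n"
    unfolding X_def Y_def by (simp_all add: lin_comb_mat_skew pair_unit_X_skew pair_unit_Y_skew)
  have upper: "dbeta p A B X Y $$ (i,j) = S $$ (i,j)" if ij: "i < ?n" "j < ?n" "i \<le> j" for i j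
  proof -
    note r = index_encode[OF ij(1,2)]
    have "dbeta p A B X Y $$ (i,j) = (\<Sum>c\<in>pair_index ?n. u c * jacobian p A B (i*?n + j) c)"
      unfolding sum_jacobian[OF Ac Bc r(1)] r(2,3) X_def Y_def ..
    also have "\<dots> = S $$ (i,j)"
      using u[OF r(1)] r(2,3) ij(3) by (simp add: upper_index_def)
    finally show ?thesis .
  qed
  have "dbeta p A B X Y $$ (i,j) = S $$ (i,j)" if ij: "i < ?n" "j < ?n" for i j
  proof (cases "i \<le> j")
    case True
    then show ?thesis using upper ij by blast
  next
    case False
    then have "j \<le> i" by simp
    then have "dbeta p A B X Y $$ (j,i) = S $$ (j,i)" using upper[OF ij(2,1)] by blast
    then show ?thesis
      unfolding dbeta_entry_sym[OF A B X Y ij] sym_mats_entry[OF S ij] .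
  qed
  moreover have "dbeta p A B X Y \<in> carrier_mat ?n ?n"
    using Ac Bc X Y skew_matsD by (blast intro: dbeta_carrier)
  ultimately have "dbeta p A B X Y = S"
    using Sc by (intro eq_matI) auto
  then show "\<exists>X\<in>skew_mats ?n. \<exists>Y\<in>skew_mats ?n. dbeta p A B X Y = S"
    using X Y by blast
qed

definition real_mat :: "nat \<Rightarrow> complex mat \<Rightarrow> bool" where
  "real_mat n M \<longleftrightarrow> M \<in> carrier_mat n n \<and> (\<forall>i<n. \<forall>j<n. M $$ (i,j) \<in> \<real>)"

lemma real_mat_mult:
  assumes "real_mat n A" "real_mat n B"
  shows "real_mat n (A * B)"
  unfolding real_mat_def
proof (intro conjI allI impI)
  show "A * B \<in> carrier_mat n n" using assms unfolding real_mat_def by (meson mult_carrier_mat)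
  fix i j assume "i < n" "j < n"
  then show "(A * B) $$ (i,j) \<in> \<real>" using assms unfolding real_mat_def
    by (subst index_mult_mat_sum[of A n n B n]) (auto intro!: sum_in_Reals Reals_mult)
qed

lemma real_mat_add: "real_mat n A \<Longrightarrow> real_mat n B \<Longrightarrow> real_mat n (A + B)"
  unfolding real_mat_def by (auto intro: Reals_add)

lemma real_mat_minus: "real_mat n A \<Longrightarrow> real_mat n B \<Longrightarrow> real_mat n (A - B)"
  unfolding real_mat_def by (auto intro: Reals_diff)

lemma real_mat_uminus: "real_mat n A \<Longrightarrow> real_mat n (- A)"
  unfolding real_mat_def by (auto intro: Reals_minus)

lemma real_mat_Jmat: "real_mat (2*p) (Jmat p)"
  unfolding real_mat_def by (auto simp: index_Jmat)

lemma real_mat_special: "real_mat (2*p) (special_A p)" "real_mat (2*p) (special_B p)"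
proof -
  show "real_mat (2*p) (special_A p)"
    unfolding real_mat_def by (auto simp: index_special_A weight_def)
  have "real_mat (2*p) (shift_mat p)"
    unfolding real_mat_def by (auto simp: index_shift_mat shift_fun_def)
  then show "real_mat (2*p) (special_B p)"
    unfolding special_B_def by (intro real_mat_uminus real_mat_mult real_mat_Jmat)
qed

lemma real_mat_pair_units: "real_mat n (pair_unit_X n c)" "real_mat n (pair_unit_Y n c)"
  unfolding real_mat_def by (auto simp: pair_unit_X_def pair_unit_Y_def skew_unit_def)

lemma real_mat_dbeta:
  assumes "real_mat (2*p) A" "real_mat (2*p) B" "real_mat (2*p) X" "real_mat (2*p) Y"
  shows "real_mat (2*p) (dbeta p A B X Y)"
  unfolding dbeta_def beta_def
  by (intro real_mat_add real_mat_minus real_mat_mult real_mat_Jmat assms)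

lemma jacobian_special_real:
  assumes "r < 2*p*(2*p)"
  shows "jacobian p (special_A p) (special_B p) r c \<in> \<real>"
  using real_mat_dbeta[OF real_mat_special real_mat_pair_units, of p c] index_decode[OF assms]
  unfolding real_mat_def jacobian_def by blast

text \<open>Truncating to \<open>n \<times> n\<close> makes \<open>gram_det\<close> a polynomial in the entries also at pairs
  of matrices of the wrong dimensions.\<close>

definition restrict_mat :: "nat \<Rightarrow> 'a mat \<Rightarrow> 'a mat" where
  "restrict_mat n A = mat n n (\<lambda>(i,j). A $$ (i,j))"

lemma restrict_mat_id: "A \<in> carrier_mat n n \<Longrightarrow> restrict_mat n A = A"
  unfolding restrict_mat_def by (auto intro!: eq_matI)

definition gram_det :: "nat \<Rightarrow> complex mat \<times> complex mat \<Rightarrow> complex" where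
  "gram_det p z = det (gram_mat (2*p*(2*p)) (upper_index (2*p)) (pair_index (2*p))
     (jacobian p (restrict_mat (2*p) (fst z)) (restrict_mat (2*p) (snd z))))"

lemma gram_det_skew:
  assumes "A \<in> skew_mats (2*p)" "B \<in> skew_mats (2*p)"
  shows "gram_det p (A,B) =
    det (gram_mat (2*p*(2*p)) (upper_index (2*p)) (pair_index (2*p)) (jacobian p A B))"
  using assms by (simp add: gram_det_def restrict_mat_id skew_mats_def)

theorem dbeta_surjective_if_gram_det:
  assumes "A \<in> skew_mats (2*p)" "B \<in> skew_mats (2*p)" "gram_det p (A,B) \<noteq> 0"
  shows "dbeta_surjective p A B"
  using assms(1,2) rows_surjective_if_det_gram_mat[OF assms(3)[unfolded gram_det_skew[OF assms(1,2)]]]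
  by (rule dbeta_surjective_if_rows_surjective)

theorem gram_det_special_nonzero:
  assumes "4 \<le> p"
  shows "gram_det p (special_A p, special_B p) \<noteq> 0"
  unfolding gram_det_skew[OF special_A_skew special_B_skew]
  by (intro det_gram_mat_nonzero pair_index_finite jacobian_special_real rows_surjective_jacobian
      special_A_skew special_B_skew dbeta_surjective_special assms)

section \<open>Polynomial functions of pairs of matrices\<close>

lemma poly_fun2_sum:
  "finite S \<Longrightarrow> (\<And>x. x \<in> S \<Longrightarrow> poly_fun2 n (f x)) \<Longrightarrow> poly_fun2 n (\<lambda>z. \<Sum>x\<in>S. f x z)"
proof (induction S rule: finite_induct)
  case empty
  then show ?case using poly_fun2.const2[of n 0] by simp
next
  case (insert a F)
  then show ?case using poly_fun2.add2[of n "f a" "\<lambda>z. \<Sum>x\<in>F. f x z"] by simp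
qed

lemma poly_fun2_prod:
  "finite S \<Longrightarrow> (\<And>x. x \<in> S \<Longrightarrow> poly_fun2 n (f x)) \<Longrightarrow> poly_fun2 n (\<lambda>z. \<Prod>x\<in>S. f x z)"
proof (induction S rule: finite_induct)
  case empty
  then show ?case using poly_fun2.const2[of n 1] by simp
next
  case (insert a F)
  then show ?case using poly_fun2.mult2[of n "f a" "\<lambda>z. \<Prod>x\<in>F. f x z"] by simp
qed

lemma poly_fun2_cmult: "poly_fun2 n f \<Longrightarrow> poly_fun2 n (\<lambda>z. c * f z)"
  using poly_fun2.mult2[OF poly_fun2.const2[of n c]] by blast

lemma poly_fun2_diff: "poly_fun2 n f \<Longrightarrow> poly_fun2 n g \<Longrightarrow> poly_fun2 n (\<lambda>z. f z - g z)"
  using poly_fun2.add2[of n f "\<lambda>z. (-1) * g z"] poly_fun2_cmult[of n g "-1"] by simp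

definition poly_mat2 :: "nat \<Rightarrow> (complex mat \<times> complex mat \<Rightarrow> complex mat) \<Rightarrow> bool" where
  "poly_mat2 n F \<longleftrightarrow> (\<forall>z. F z \<in> carrier_mat n n) \<and> (\<forall>i<n. \<forall>j<n. poly_fun2 n (\<lambda>z. F z $$ (i,j)))"

lemma poly_mat2_const: "C \<in> carrier_mat n n \<Longrightarrow> poly_mat2 n (\<lambda>z. C)"
  unfolding poly_mat2_def by (auto intro: poly_fun2.const2)

lemma poly_mat2_restrict: "poly_mat2 n (\<lambda>z. restrict_mat n (fst z))" "poly_mat2 n (\<lambda>z. restrict_mat n (snd z))"
  unfolding poly_mat2_def restrict_mat_def
  using poly_fun2.fst2[of _ n] poly_fun2.snd2[of _ n] by (simp_all add: case_prod_unfold)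

lemma poly_mat2_mult:
  assumes "poly_mat2 n F" "poly_mat2 n G"
  shows "poly_mat2 n (\<lambda>z. F z * G z)"
  unfolding poly_mat2_def
proof (intro conjI allI impI)
  fix z show "F z * G z \<in> carrier_mat n n"
    using assms unfolding poly_mat2_def by (meson mult_carrier_mat)
next
  fix i j assume ij: "i < n" "j < n"
  have "poly_fun2 n (\<lambda>z. \<Sum>k<n. F z $$ (i,k) * G z $$ (k,j))"
    using assms ij unfolding poly_mat2_def by (intro poly_fun2_sum poly_fun2.mult2) auto
  moreover have "(F z * G z) $$ (i,j) = (\<Sum>k<n. F z $$ (i,k) * G z $$ (k,j))" for z
    using assms ij unfolding poly_mat2_def by (blast intro: index_mult_mat_sum)
  ultimately show "poly_fun2 n (\<lambda>z. (F z * G z) $$ (i, j))" by simp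
qed

lemma poly_mat2_add:
  assumes "poly_mat2 n F" "poly_mat2 n G"
  shows "poly_mat2 n (\<lambda>z. F z + G z)"
  unfolding poly_mat2_def
proof (intro conjI allI impI)
  fix z show "F z + G z \<in> carrier_mat n n"
    using assms unfolding poly_mat2_def by (meson add_carrier_mat)
next
  fix i j assume ij: "i < n" "j < n"
  have "poly_fun2 n (\<lambda>z. F z $$ (i,j) + G z $$ (i,j))"
    using assms ij unfolding poly_mat2_def by (intro poly_fun2.add2) auto
  moreover have "(F z + G z) $$ (i,j) = F z $$ (i,j) + G z $$ (i,j)" for z
    using assms ij unfolding poly_mat2_def by (metis carrier_matD index_add_mat(1))
  ultimately show "poly_fun2 n (\<lambda>z. (F z + G z) $$ (i, j))" by simp
qed

lemma poly_mat2_minus: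
  assumes "poly_mat2 n F" "poly_mat2 n G"
  shows "poly_mat2 n (\<lambda>z. F z - G z)"
  unfolding poly_mat2_def
proof (intro conjI allI impI)
  fix z show "F z - G z \<in> carrier_mat n n"
    using assms unfolding poly_mat2_def by (meson minus_carrier_mat)
next
  fix i j assume ij: "i < n" "j < n"
  have "poly_fun2 n (\<lambda>z. F z $$ (i,j) - G z $$ (i,j))"
    using assms ij unfolding poly_mat2_def by (intro poly_fun2_diff) auto
  moreover have "(F z - G z) $$ (i,j) = F z $$ (i,j) - G z $$ (i,j)" for z
    using assms ij unfolding poly_mat2_def by (metis carrier_matD index_minus_mat(1))
  ultimately show "poly_fun2 n (\<lambda>z. (F z - G z) $$ (i, j))" by simp
qed

lemma poly_mat2_beta:
  "poly_mat2 (2*p) F \<Longrightarrow> poly_mat2 (2*p) G \<Longrightarrow> poly_mat2 (2*p) (\<lambda>z. beta p (F z) (G z))"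
  unfolding beta_def by (intro poly_mat2_minus poly_mat2_mult poly_mat2_const Jmat_carrier)

lemma poly_mat2_dbeta:
  assumes "X \<in> carrier_mat (2*p) (2*p)" "Y \<in> carrier_mat (2*p) (2*p)"
  shows "poly_mat2 (2*p) (\<lambda>z. dbeta p (restrict_mat (2*p) (fst z)) (restrict_mat (2*p) (snd z)) X Y)"
  unfolding dbeta_def
  by (intro poly_mat2_add poly_mat2_beta poly_mat2_const poly_mat2_restrict assms)

lemma poly_fun2_gram_det: "poly_fun2 (2*p) (gram_det p)"
proof -
  let ?N = "2*p*(2*p)"
  let ?G = "\<lambda>z. gram_mat ?N (upper_index (2*p)) (pair_index (2*p))
     (jacobian p (restrict_mat (2*p) (fst z)) (restrict_mat (2*p) (snd z)))"
  have jac: "poly_fun2 (2*p) (\<lambda>z. jacobian p (restrict_mat (2*p) (fst z)) (restrict_mat (2*p) (snd z)) r c)"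
    if "r < ?N" for r c
    using poly_mat2_dbeta[OF pair_unit_X_carrier pair_unit_Y_carrier, of p c] index_decode[OF that]
    unfolding poly_mat2_def jacobian_def by blast
  have entry: "poly_fun2 (2*p) (\<lambda>z. ?G z $$ (r,r'))" if "r < ?N" "r' < ?N" for r r'
  proof -
    have "poly_fun2 (2*p) (\<lambda>z. (\<Sum>c\<in>pair_index (2*p).
        jacobian p (restrict_mat (2*p) (fst z)) (restrict_mat (2*p) (snd z)) r c *
        jacobian p (restrict_mat (2*p) (fst z)) (restrict_mat (2*p) (snd z)) r' c)
        + (if r = r' \<and> \<not> upper_index (2*p) r then 1 else 0))"
      by (intro poly_fun2.add2 poly_fun2_sum poly_fun2.mult2 jac poly_fun2.const2 pair_index_finite that)
    then show ?thesis using that by (simp add: gram_mat_def)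
  qed
  have "poly_fun2 (2*p) (\<lambda>z. \<Sum>s\<in>{s. s permutes {0..<?N}}. of_int (sign s) * (\<Prod>i = 0..<?N. ?G z $$ (i, s i)))"
    by (intro poly_fun2_sum poly_fun2_cmult poly_fun2_prod entry)
      (auto simp: finite_permutations permutes_in_image)
  then show ?thesis
    unfolding gram_det_def det_def'[OF gram_mat_carrier] .
qed

lemma poly_zero_if_vanishes_off_roots:
  fixes q r :: "'a::{idom,ring_char_0} poly"
  assumes "q \<noteq> 0" "\<And>t. poly q t \<noteq> 0 \<Longrightarrow> poly r t = 0"
  shows "r = 0"
proof (rule ccontr)
  assume "r \<noteq> 0"
  then have "finite ({t. poly r t = 0} \<union> {t. poly q t = 0})"
    using assms(1) poly_roots_finite by blast
  moreover have "UNIV \<subseteq> {t. poly r t = 0} \<union> {t. poly q t = 0}"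
    using assms(2) by blast
  ultimately show False
    using infinite_UNIV_char_0 finite_subset by blast
qed

lemma poly_fun2_along_poly_curve:
  assumes "poly_fun2 n f"
    and "\<And>i j. i < n \<Longrightarrow> j < n \<Longrightarrow> \<exists>q. \<forall>t. fst (L t) $$ (i,j) = poly q t"
    and "\<And>i j. i < n \<Longrightarrow> j < n \<Longrightarrow> \<exists>q. \<forall>t. snd (L t) $$ (i,j) = poly q t"
  shows "\<exists>q. \<forall>t. f (L t) = poly q t"
  using assms
proof (induction rule: poly_fun2.induct)
  case (const2 c)
  show ?case by (intro exI[of _ "[:c:]"]) simp
next
  case (fst2 i j)
  then show ?case by (simp add: case_prod_unfold)
next
  case (snd2 i j)
  then show ?case by (simp add: case_prod_unfold)
next
  case (add2 f g)
  then obtain q1 q2 where "\<forall>t. f (L t) = poly q1 t" "\<forall>t. g (L t) = poly q2 t" by blast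
  then show ?case by (intro exI[of _ "q1 + q2"]) simp
next
  case (mult2 f g)
  then obtain q1 q2 where "\<forall>t. f (L t) = poly q1 t" "\<forall>t. g (L t) = poly q2 t" by blast
  then show ?case by (intro exI[of _ "q1 * q2"]) simp
qed

text \<open>Restricted to the line through a point where \<open>f\<close> does not vanish, \<open>f\<close> is a nonzero
  polynomial, so \<open>h\<close> vanishes at all but finitely many points of the line.\<close>

lemma poly_fun2_vanishes_on_skew_pairs:
  assumes f: "poly_fun2 n f" and h: "poly_fun2 n h"
    and A0: "A0 \<in> skew_mats n" and B0: "B0 \<in> skew_mats n" and f0: "f (A0,B0) \<noteq> 0"
    and vanish: "\<And>A B. A \<in> skew_mats n \<Longrightarrow> B \<in> skew_mats n \<Longrightarrow> f (A,B) \<noteq> 0 \<Longrightarrow> h (A,B) = 0"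
    and A: "A \<in> skew_mats n" and B: "B \<in> skew_mats n"
  shows "h (A,B) = 0"
proof -
  define U where "U = A + (-1) \<cdot>\<^sub>m A0"
  define V where "V = B + (-1) \<cdot>\<^sub>m B0"
  define L where "L t = (A0 + t \<cdot>\<^sub>m U, B0 + t \<cdot>\<^sub>m V)" for t
  have U: "U \<in> skew_mats n" and V: "V \<in> skew_mats n"
    unfolding U_def V_def by (simp_all add: skew_mats_add_smult A0 B0 A B)
  have c: "A0 \<in> carrier_mat n n" "B0 \<in> carrier_mat n n" "U \<in> carrier_mat n n" "V \<in> carrier_mat n n"
    "A \<in> carrier_mat n n" "B \<in> carrier_mat n n"
    using A0 B0 U V A B skew_matsD by blast+
  have L_skew: "fst (L t) \<in> skew_mats n" "snd (L t) \<in> skew_mats n" for t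
    unfolding L_def by (simp_all add: skew_mats_add_smult A0 B0 U V)
  have "\<exists>q. \<forall>t. fst (L t) $$ (i,j) = poly q t" "\<exists>q. \<forall>t. snd (L t) $$ (i,j) = poly q t"
    if "i < n" "j < n" for i j
    using that c
    by (intro exI[of _ "[:A0 $$ (i,j), U $$ (i,j):]"] exI[of _ "[:B0 $$ (i,j), V $$ (i,j):]"]; simp add: L_def)+
  then obtain q r where q: "\<And>t. f (L t) = poly q t" and r: "\<And>t. h (L t) = poly r t"
    using poly_fun2_along_poly_curve[OF f] poly_fun2_along_poly_curve[OF h] by metis
  have "L 0 = (A0,B0)" "L 1 = (A,B)"
    unfolding L_def U_def V_def using c by (auto intro!: eq_matI)
  have "q \<noteq> 0"
    using f0 q[of 0] \<open>L 0 = (A0,B0)\<close> by auto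
  then have "r = 0"
    by (rule poly_zero_if_vanishes_off_roots) (metis L_skew vanish prod.collapse q r)
  then show ?thesis
    using r[of 1] \<open>L 1 = (A,B)\<close> by simp
qed

section \<open>Dominance\<close>

inductive poly_fun1_deg :: "nat \<Rightarrow> nat \<Rightarrow> (complex mat \<Rightarrow> complex) \<Rightarrow> bool" for n where
  const: "poly_fun1_deg n d (\<lambda>_. c)"
| entry: "i < n \<Longrightarrow> j < n \<Longrightarrow> 1 \<le> d \<Longrightarrow> poly_fun1_deg n d (\<lambda>S. S $$ (i,j))"
| add: "poly_fun1_deg n d f \<Longrightarrow> poly_fun1_deg n d g \<Longrightarrow> poly_fun1_deg n d (\<lambda>x. f x + g x)"
| mult: "poly_fun1_deg n d1 f \<Longrightarrow> poly_fun1_deg n d2 g \<Longrightarrow> poly_fun1_deg n (d1 + d2) (\<lambda>x. f x * g x)"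

lemma poly_fun1_deg_mono: "poly_fun1_deg n d f \<Longrightarrow> d \<le> e \<Longrightarrow> poly_fun1_deg n e f"
proof (induction arbitrary: e rule: poly_fun1_deg.induct)
  case (mult d1 f d2 g)
  then have "poly_fun1_deg n (e - d2 + d2) (\<lambda>x. f x * g x)"
    by (intro poly_fun1_deg.mult) auto
  then show ?case using mult by simp
qed (auto intro: poly_fun1_deg.intros)

lemma poly_fun1_has_deg: "poly_fun1 n g \<Longrightarrow> \<exists>d. poly_fun1_deg n d g"
proof (induction rule: poly_fun1.induct)
  case (add1 f g)
  then obtain d1 d2 where "poly_fun1_deg n d1 f" "poly_fun1_deg n d2 g" by blast
  then have "poly_fun1_deg n (max d1 d2) f" "poly_fun1_deg n (max d1 d2) g"
    by (auto intro: poly_fun1_deg_mono)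
  then show ?case by (blast intro: poly_fun1_deg.add)
qed (blast intro: poly_fun1_deg.intros)+

lemma poly_fun1_deg_0_const: "poly_fun1_deg n d f \<Longrightarrow> d = 0 \<Longrightarrow> \<exists>c. f = (\<lambda>_. c)"
  by (induction rule: poly_fun1_deg.induct) force+

lemma poly_fun2_comp_poly_fun1_deg:
  "poly_fun1_deg n d g \<Longrightarrow> poly_mat2 n F \<Longrightarrow> poly_fun2 n (\<lambda>z. g (F z))"
  by (induction rule: poly_fun1_deg.induct) (auto intro: poly_fun2.intros simp: poly_mat2_def)

definition has_curve_deriv_0 :: "nat \<Rightarrow> (complex \<Rightarrow> complex mat) \<Rightarrow> complex mat \<Rightarrow> bool" where
  "has_curve_deriv_0 n M H \<longleftrightarrow>
     (\<forall>i<n. \<forall>j<n. ((\<lambda>t. M t $$ (i,j)) has_field_derivative H $$ (i,j)) (at 0))"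

lemma directional_deriv_poly_fun1_deg:
  "poly_fun1_deg n d g \<Longrightarrow> \<exists>D. poly_fun1_deg n (d - 1) D \<and>
     (\<forall>M. has_curve_deriv_0 n M H \<longrightarrow> ((\<lambda>t. g (M t)) has_field_derivative D (M 0)) (at 0))"
proof (induction rule: poly_fun1_deg.induct)
  case (const d c)
  show ?case by (intro exI[of _ "\<lambda>_. 0"]) (auto intro: poly_fun1_deg.const)
next
  case (entry i j d)
  then show ?case
    by (intro exI[of _ "\<lambda>_. H $$ (i,j)"]) (auto intro: poly_fun1_deg.const simp: has_curve_deriv_0_def)
next
  case (add d f g)
  then obtain D1 D2 where "poly_fun1_deg n (d - 1) D1" "poly_fun1_deg n (d - 1) D2"
    "\<forall>M. has_curve_deriv_0 n M H \<longrightarrow> ((\<lambda>t. f (M t)) has_field_derivative D1 (M 0)) (at 0)"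
    "\<forall>M. has_curve_deriv_0 n M H \<longrightarrow> ((\<lambda>t. g (M t)) has_field_derivative D2 (M 0)) (at 0)"
    by blast
  then show ?case
    by (intro exI[of _ "\<lambda>x. D1 x + D2 x"]) (auto intro: poly_fun1_deg.add DERIV_add)
next
  case (mult d1 f d2 g)
  then obtain D1 D2 where D1: "poly_fun1_deg n (d1 - 1) D1"
      "\<forall>M. has_curve_deriv_0 n M H \<longrightarrow> ((\<lambda>t. f (M t)) has_field_derivative D1 (M 0)) (at 0)"
    and D2: "poly_fun1_deg n (d2 - 1) D2"
      "\<forall>M. has_curve_deriv_0 n M H \<longrightarrow> ((\<lambda>t. g (M t)) has_field_derivative D2 (M 0)) (at 0)"
    by blast
  consider "d1 = 0" | "d2 = 0" | "d1 \<noteq> 0" "d2 \<noteq> 0" by blast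
  then show ?case
  proof cases
    case 1
    then obtain c where f: "f = (\<lambda>_. c)" using poly_fun1_deg_0_const[OF mult.hyps(1)] by blast
    have "((\<lambda>t. f (M t) * g (M t)) has_field_derivative c * D2 (M 0)) (at 0)"
      if "has_curve_deriv_0 n M H" for M
      using DERIV_cmult[OF D2(2)[rule_format, OF that], of c] f by simp
    moreover have "poly_fun1_deg n (0 + (d2 - 1)) (\<lambda>x. c * D2 x)"
      by (intro poly_fun1_deg.mult poly_fun1_deg.const D2(1))
    ultimately show ?thesis
      using 1 by (intro exI[of _ "\<lambda>x. c * D2 x"]) auto
  next
    case 2
    then obtain c where g: "g = (\<lambda>_. c)" using poly_fun1_deg_0_const[OF mult.hyps(2)] by blast
    have "((\<lambda>t. f (M t) * g (M t)) has_field_derivative D1 (M 0) * c) (at 0)"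
      if "has_curve_deriv_0 n M H" for M
      using DERIV_cmult[OF D1(2)[rule_format, OF that], of c] g by (simp add: mult.commute)
    moreover have "poly_fun1_deg n ((d1 - 1) + 0) (\<lambda>x. D1 x * c)"
      by (intro poly_fun1_deg.mult poly_fun1_deg.const D1(1))
    ultimately show ?thesis
      using 2 by (intro exI[of _ "\<lambda>x. D1 x * c"]) auto
  next
    case 3
    have "poly_fun1_deg n ((d1 - 1) + d2) (\<lambda>x. D1 x * g x)" "poly_fun1_deg n (d1 + (d2 - 1)) (\<lambda>x. f x * D2 x)"
      by (intro poly_fun1_deg.mult D1(1) D2(1) mult.hyps)+
    then have "poly_fun1_deg n (d1 + d2 - 1) (\<lambda>x. D1 x * g x + f x * D2 x)"
      using 3 by (intro poly_fun1_deg.add) (simp_all add: add.commute)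
    moreover have "((\<lambda>t. f (M t) * g (M t)) has_field_derivative D1 (M 0) * g (M 0) + f (M 0) * D2 (M 0)) (at 0)"
      if "has_curve_deriv_0 n M H" for M
      using DERIV_mult[OF D1(2)[rule_format, OF that] D2(2)[rule_format, OF that]] by (simp add: mult.commute)
    ultimately show ?thesis
      by (intro exI[of _ "\<lambda>x. D1 x * g x + f x * D2 x"]) auto
  qed
qed

lemma index_mult_mat3_sum:
  assumes "U \<in> carrier_mat n n" "W \<in> carrier_mat n n" "V \<in> carrier_mat n n" "i < n" "j < n"
  shows "(U * W * V) $$ (i,j) = (\<Sum>k<n. \<Sum>l<n. U $$ (i,k) * (W $$ (k,l) * V $$ (l,j)))"
proof -
  have "(U * W * V) $$ (i,j) = (U * (W * V)) $$ (i,j)"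
    using assoc_mult_mat[OF assms(1-3)] by simp
  also have "\<dots> = (\<Sum>k<n. U $$ (i,k) * (W * V) $$ (k,j))"
    using assms by (intro index_mult_mat_sum) auto
  also have "\<dots> = (\<Sum>k<n. \<Sum>l<n. U $$ (i,k) * (W $$ (k,l) * V $$ (l,j)))"
    using assms by (intro sum.cong refl)
      (simp del: index_mult_mat(1) add: index_mult_mat_sum[OF assms(2,3)] sum_distrib_left)
  finally show ?thesis .
qed

lemma index_beta_double_sum:
  assumes "U \<in> carrier_mat (2*p) (2*p)" "V \<in> carrier_mat (2*p) (2*p)" "i < 2*p" "j < 2*p"
  shows "beta p U V $$ (i,j) =
    (\<Sum>k<2*p. \<Sum>l<2*p. U $$ (i,k) * (Jmat p $$ (k,l) * V $$ (l,j)))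
    - (\<Sum>k<2*p. \<Sum>l<2*p. V $$ (i,k) * (Jmat p $$ (k,l) * U $$ (l,j)))"
proof -
  have "V * Jmat p * U \<in> carrier_mat (2*p) (2*p)"
    using assms by (meson Jmat_carrier mult_carrier_mat)
  then have "beta p U V $$ (i,j) = (U * Jmat p * V) $$ (i,j) - (V * Jmat p * U) $$ (i,j)"
    unfolding beta_def by (intro index_minus_mat(1)) (use assms(3,4) in auto)
  then show ?thesis
    by (simp only: index_mult_mat3_sum[OF assms(1) Jmat_carrier assms(2) assms(3,4)]
        index_mult_mat3_sum[OF assms(2) Jmat_carrier assms(1) assms(3,4)])
qed

lemma sum_bilinear_add_smult:
  fixes t :: complex
  shows "(\<Sum>k<n. \<Sum>l<n. (a k + t * x k) * (w k l * (b l + t * y l))) =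
    (\<Sum>k<n. \<Sum>l<n. a k * (w k l * b l))
    + t * ((\<Sum>k<n. \<Sum>l<n. x k * (w k l * b l)) + (\<Sum>k<n. \<Sum>l<n. a k * (w k l * y l)))
    + t\<^sup>2 * (\<Sum>k<n. \<Sum>l<n. x k * (w k l * y l))"
proof -
  have "(a k + t * x k) * (w k l * (b l + t * y l)) = a k * (w k l * b l) + t * (x k * (w k l * b l))
      + t * (a k * (w k l * y l)) + t\<^sup>2 * (x k * (w k l * y l))" for k l
    by (simp add: algebra_simps power2_eq_square)
  then have "(\<Sum>k<n. \<Sum>l<n. (a k + t * x k) * (w k l * (b l + t * y l))) =
      (\<Sum>k<n. \<Sum>l<n. a k * (w k l * b l) + t * (x k * (w k l * b l))
        + t * (a k * (w k l * y l)) + t\<^sup>2 * (x k * (w k l * y l)))"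
    by simp
  also have "\<dots> = (\<Sum>k<n. \<Sum>l<n. a k * (w k l * b l)) + t * (\<Sum>k<n. \<Sum>l<n. x k * (w k l * b l))
      + t * (\<Sum>k<n. \<Sum>l<n. a k * (w k l * y l)) + t\<^sup>2 * (\<Sum>k<n. \<Sum>l<n. x k * (w k l * y l))"
    by (simp only: sum.distrib sum_distrib_left)
  finally show ?thesis
    by (simp add: algebra_simps)
qed

lemma index_beta_add_smult:
  assumes "A \<in> carrier_mat (2*p) (2*p)" "B \<in> carrier_mat (2*p) (2*p)"
    "X \<in> carrier_mat (2*p) (2*p)" "Y \<in> carrier_mat (2*p) (2*p)" "i < 2*p" "j < 2*p"
  shows "beta p (A + t \<cdot>\<^sub>m X) (B + t \<cdot>\<^sub>m Y) $$ (i,j) =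
    beta p A B $$ (i,j) + t * dbeta p A B X Y $$ (i,j) + t\<^sup>2 * beta p X Y $$ (i,j)"
proof -
  let ?n = "2*p"
  have c: "A + t \<cdot>\<^sub>m X \<in> carrier_mat ?n ?n" "B + t \<cdot>\<^sub>m Y \<in> carrier_mat ?n ?n"
    using assms by auto
  have dbeta_entry: "dbeta p A B X Y $$ (i,j) = beta p X B $$ (i,j) + beta p A Y $$ (i,j)"
    unfolding dbeta_def using assms beta_carrier[of X p B] beta_carrier[of A p Y] by simp
  have "(\<Sum>k<?n. \<Sum>l<?n. (U + t \<cdot>\<^sub>m V) $$ (i,k) * (Jmat p $$ (k,l) * (U' + t \<cdot>\<^sub>m V') $$ (l,j))) =
      (\<Sum>k<?n. \<Sum>l<?n. (U $$ (i,k) + t * V $$ (i,k)) * (Jmat p $$ (k,l) * (U' $$ (l,j) + t * V' $$ (l,j))))"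
    if "U \<in> carrier_mat ?n ?n" "V \<in> carrier_mat ?n ?n" "U' \<in> carrier_mat ?n ?n" "V' \<in> carrier_mat ?n ?n"
    for U V U' V'
    using that assms(5,6) by (intro sum.cong refl) simp
  note expand = this[OF assms(1,3,2,4)] this[OF assms(2,4,1,3)]
  show ?thesis
    unfolding index_beta_double_sum[OF c assms(5,6)] expand sum_bilinear_add_smult dbeta_entry
      index_beta_double_sum[OF assms(1,2,5,6)] index_beta_double_sum[OF assms(3,2,5,6)]
      index_beta_double_sum[OF assms(1,4,5,6)] index_beta_double_sum[OF assms(3,4,5,6)]
    by (simp add: algebra_simps)
qed

lemma has_curve_deriv_0_beta:
  assumes "A \<in> carrier_mat (2*p) (2*p)" "B \<in> carrier_mat (2*p) (2*p)"
    "X \<in> carrier_mat (2*p) (2*p)" "Y \<in> carrier_mat (2*p) (2*p)"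
  shows "has_curve_deriv_0 (2*p) (\<lambda>t. beta p (A + t \<cdot>\<^sub>m X) (B + t \<cdot>\<^sub>m Y)) (dbeta p A B X Y)"
  unfolding has_curve_deriv_0_def
proof (intro allI impI)
  fix i j assume ij: "i < 2*p" "j < 2*p"
  have "((\<lambda>t. c + t * h + t\<^sup>2 * k) has_field_derivative h) (at 0)" for c h k :: complex
    by (auto intro!: derivative_eq_intros)
  then show "((\<lambda>t. beta p (A + t \<cdot>\<^sub>m X) (B + t \<cdot>\<^sub>m Y) $$ (i,j)) has_field_derivative dbeta p A B X Y $$ (i,j)) (at 0)"
    unfolding index_beta_add_smult[OF assms ij] .
qed

lemma directional_deriv_vanishes_at_beta:
  assumes vanish: "\<And>A B. A \<in> skew_mats (2*p) \<Longrightarrow> B \<in> skew_mats (2*p) \<Longrightarrow> g (beta p A B) = 0"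
    and D: "\<And>M. has_curve_deriv_0 (2*p) M S \<Longrightarrow> ((\<lambda>t. g (M t)) has_field_derivative D (M 0)) (at 0)"
    and A: "A \<in> skew_mats (2*p)" and B: "B \<in> skew_mats (2*p)"
    and X: "X \<in> skew_mats (2*p)" and Y: "Y \<in> skew_mats (2*p)" and XY: "dbeta p A B X Y = S"
  shows "D (beta p A B) = 0"
proof -
  let ?M = "\<lambda>t. beta p (A + t \<cdot>\<^sub>m X) (B + t \<cdot>\<^sub>m Y)"
  have c: "A \<in> carrier_mat (2*p) (2*p)" "B \<in> carrier_mat (2*p) (2*p)"
    "X \<in> carrier_mat (2*p) (2*p)" "Y \<in> carrier_mat (2*p) (2*p)"
    using A B X Y skew_matsD by blast+
  have "((\<lambda>t. g (?M t)) has_field_derivative D (?M 0)) (at 0)"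
    using D has_curve_deriv_0_beta[OF c] XY by blast
  moreover have "(\<lambda>t. g (?M t)) = (\<lambda>t. 0)"
    using vanish skew_mats_add_smult[OF A X] skew_mats_add_smult[OF B Y] by auto
  ultimately have "((\<lambda>t. 0) has_field_derivative D (?M 0)) (at 0)"
    by simp
  then have "D (?M 0) = 0"
    using DERIV_const DERIV_unique by blast
  moreover have "A + 0 \<cdot>\<^sub>m X = A" "B + 0 \<cdot>\<^sub>m Y = B"
    using c by (auto intro!: eq_matI)
  ultimately show ?thesis by simp
qed

lemma eq_at_zero_if_directional_deriv_vanishes:
  assumes g: "poly_fun1_deg n d g" and H: "H \<in> carrier_mat n n"
    and D: "\<And>M. has_curve_deriv_0 n M H \<Longrightarrow> ((\<lambda>t. g (M t)) has_field_derivative D (M 0)) (at 0)"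
    and D0: "\<And>t. D (t \<cdot>\<^sub>m H) = 0"
  shows "g H = g (0 \<cdot>\<^sub>m H)"
proof -
  have "\<exists>q. \<forall>t. g (t \<cdot>\<^sub>m H) = poly q t"
    using g
  proof (induction rule: poly_fun1_deg.induct)
    case (const d c)
    show ?case by (intro exI[of _ "[:c:]"]) simp
  next
    case (entry i j d)
    show ?case using entry H by (intro exI[of _ "[:0, H $$ (i,j):]"]) simp
  next
    case (add d f g)
    then obtain q1 q2 where "\<forall>t. f (t \<cdot>\<^sub>m H) = poly q1 t" "\<forall>t. g (t \<cdot>\<^sub>m H) = poly q2 t" by blast
    then show ?case by (intro exI[of _ "q1 + q2"]) simp
  next
    case (mult d1 f d2 g)
    then obtain q1 q2 where "\<forall>t. f (t \<cdot>\<^sub>m H) = poly q1 t" "\<forall>t. g (t \<cdot>\<^sub>m H) = poly q2 t" by blast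
    then show ?case by (intro exI[of _ "q1 * q2"]) simp
  qed
  then obtain q where q: "\<And>t. g (t \<cdot>\<^sub>m H) = poly q t" by blast
  have "poly (pderiv q) t0 = 0" for t0
  proof -
    have "has_curve_deriv_0 n (\<lambda>t. (t + t0) \<cdot>\<^sub>m H) H"
      unfolding has_curve_deriv_0_def using H by (auto intro!: derivative_eq_intros)
    then have "((\<lambda>t. poly q (t + t0)) has_field_derivative 0) (at 0)"
      using D[of "\<lambda>t. (t + t0) \<cdot>\<^sub>m H"] D0 q by simp
    then have "(poly q has_field_derivative 0) (at (0 + t0))"
      by (subst DERIV_shift)
    moreover have "(poly q has_field_derivative poly (pderiv q) t0) (at (0 + t0))"
      by simp
    ultimately show ?thesis
      using DERIV_unique by blast
  qed
  then have "pderiv q = 0"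
    using poly_all_0_iff_0 by blast
  then have "degree q = 0"
    by (simp add: pderiv_eq_0_iff)
  then obtain c where c: "q = [:c:]"
    by (rule degree_eq_zeroE)
  have "1 \<cdot>\<^sub>m H = H"
    using H by (auto intro!: eq_matI)
  then have "g H = g (1 \<cdot>\<^sub>m H)"
    by simp
  also have "\<dots> = g (0 \<cdot>\<^sub>m H)"
    using q c by simp
  finally show ?thesis .
qed

lemma directional_deriv_vanishes_on_beta_image:
  assumes p: "4 \<le> p" and D_deg: "poly_fun1_deg (2*p) d D"
    and vanish: "\<And>A B. A \<in> skew_mats (2*p) \<Longrightarrow> B \<in> skew_mats (2*p) \<Longrightarrow> g (beta p A B) = 0"
    and D: "\<And>M. has_curve_deriv_0 (2*p) M S \<Longrightarrow> ((\<lambda>t. g (M t)) has_field_derivative D (M 0)) (at 0)"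
    and S: "S \<in> sym_mats (2*p)" and A: "A \<in> skew_mats (2*p)" and B: "B \<in> skew_mats (2*p)"
  shows "D (beta p A B) = 0"
proof -
  let ?n = "2*p"
  let ?h = "\<lambda>z. D (beta p (restrict_mat ?n (fst z)) (restrict_mat ?n (snd z)))"
  have "?h (A,B) = 0"
  proof (rule poly_fun2_vanishes_on_skew_pairs[OF poly_fun2_gram_det _ special_A_skew special_B_skew
        gram_det_special_nonzero[OF p] _ A B])
    show "poly_fun2 ?n ?h"
      by (intro poly_fun2_comp_poly_fun1_deg[OF D_deg] poly_mat2_beta poly_mat2_restrict)
  next
    fix A' B' assume A': "A' \<in> skew_mats ?n" and B': "B' \<in> skew_mats ?n" and "gram_det p (A',B') \<noteq> 0"
    then obtain X Y where XY: "X \<in> skew_mats ?n" "Y \<in> skew_mats ?n" "dbeta p A' B' X Y = S"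
      using dbeta_surjective_if_gram_det S unfolding dbeta_surjective_def by blast
    have "D (beta p A' B') = 0"
      by (rule directional_deriv_vanishes_at_beta[where g = g and D = D and S = S, OF vanish D A' B' XY])
    then show "?h (A',B') = 0"
      using A' B' by (simp add: restrict_mat_id skew_mats_def)
  qed
  then show ?thesis
    using A B by (simp add: restrict_mat_id skew_mats_def)
qed

theorem vanishes_on_sym_mats_if_vanishes_on_beta_image:
  assumes p: "4 \<le> p" and g: "poly_fun1_deg (2*p) d g"
    and vanish: "\<And>A B. A \<in> skew_mats (2*p) \<Longrightarrow> B \<in> skew_mats (2*p) \<Longrightarrow> g (beta p A B) = 0"
    and S: "S \<in> sym_mats (2*p)"
  shows "g S = 0"
  using g vanish S
proof (induction d arbitrary: g S)
  case 0
  then obtain c where "g = (\<lambda>_. c)" using poly_fun1_deg_0_const by blast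
  then show ?case using "0.prems"(2)[OF zero_skew_mats zero_skew_mats] by simp
next
  case (Suc d)
  let ?n = "2*p"
  have Sc: "S \<in> carrier_mat ?n ?n" using Suc.prems(3) by (simp add: sym_mats_def)
  obtain D where D_deg: "poly_fun1_deg ?n d D"
    and D: "\<And>M. has_curve_deriv_0 ?n M S \<Longrightarrow> ((\<lambda>t. g (M t)) has_field_derivative D (M 0)) (at 0)"
    using directional_deriv_poly_fun1_deg[OF Suc.prems(1), of S] by auto
  have "D S' = 0" if "S' \<in> sym_mats ?n" for S'
    using Suc.IH[OF D_deg] that
      directional_deriv_vanishes_on_beta_image[OF p D_deg Suc.prems(2) D Suc.prems(3)] by blast
  then have "g S = g (0 \<cdot>\<^sub>m S)"
    using eq_at_zero_if_directional_deriv_vanishes[OF Suc.prems(1) Sc D] sym_mats_smult[OF Suc.prems(3)]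
    by blast
  also have "0 \<cdot>\<^sub>m S = beta p (0\<^sub>m ?n ?n) (0\<^sub>m ?n ?n)"
    using Sc by (auto intro!: eq_matI simp: beta_def)
  also have "g \<dots> = 0"
    using Suc.prems(2)[OF zero_skew_mats zero_skew_mats] .
  finally show ?case .
qed

theorem mainTheorem14:
  fixes p :: nat
  assumes "2 * p \<ge> 8"
  shows "holds_generally2 (2*p) (dbeta_surjective p) \<and> beta_dominant p"
proof
  have p: "4 \<le> p" using assms by simp
  show "holds_generally2 (2*p) (dbeta_surjective p)"
    unfolding holds_generally2_def
  proof (intro exI[of _ "gram_det p"] conjI ballI impI)
    show "poly_fun2 (2*p) (gram_det p)"
      by (rule poly_fun2_gram_det)
    show "\<exists>A\<in>skew_mats (2*p). \<exists>B\<in>skew_mats (2*p). gram_det p (A,B) \<noteq> 0"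
      using gram_det_special_nonzero[OF p] special_A_skew special_B_skew by blast
  qed (rule dbeta_surjective_if_gram_det)
  show "beta_dominant p"
    unfolding beta_dominant_def
  proof (intro allI impI ballI)
    fix g S
    assume "poly_fun1 (2*p) g" "\<forall>A\<in>skew_mats (2*p). \<forall>B\<in>skew_mats (2*p). g (beta p A B) = 0"
      and S: "S \<in> sym_mats (2*p)"
    then show "g S = 0"
      using poly_fun1_has_deg vanishes_on_sym_mats_if_vanishes_on_beta_image[OF p _ _ S] by blast
  qed
qed

end
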